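(* Let $T\in(0,\infty)$, let $X_0,X_1$ be Banach spaces with $X_1\hookrightarrow X_0$ densely and continuously, let $A\colon[0,T]\to\mathcal{L}(X_1,X_0)$ be strongly measurable in the strong operator topology, let $p\in(1,\infty)$, $\kappa\in[0,p-1)$, and suppose $A$ has maximal $L^p(0,T,w_\kappa)$-regularity. Then for any $0\le a<b\le T$ and $f\in L^p(a,b,w_\kappa;X_0)$ there exists a unique strong solution $u\in\mathrm{MR}^p(a,b,w_\kappa)$ of $u'+Au=f$ on $(a,b)$, $u(a)=0$, and \[\|u\|_{\mathrm{MR}^p(a,b,w_\kappa)}\le M_{p,\kappa,A}(0,T)\|f\|_{L^p(a,b,w_\kappa;X_0)}.\] In particular, $A$ has maximal $L^p(a,b,w_\kappa)$-regularity and $M_{p,\kappa,A}(a,b)\le M_{p,\kappa,A}(0,T)$.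
   Context: For $\mu\ge0$, $w_\mu(t)=|t|^\mu$ (never shifted, also on subintervals). $L^p(a,b,w_\kappa;X)$ is the space of strongly measurable $f\colon(a,b)\to X$ with $\int_a^bt^\kappa\|f(t)\|_X^pdt<\infty$, $W^{1,p}(a,b,w_\kappa;X)$ analogously, and $\mathrm{MR}^p(a,b,w_\kappa):=L^p(a,b,w_\kappa;X_1)\cap W^{1,p}(a,b,w_\kappa;X_0)$ with norm $\max\{\|u\|_{L^p(a,b,w_\kappa;X_1)},\|u\|_{W^{1,p}(a,b,w_\kappa;X_0)}\}$. A strong solution of $u'+Au=f$ on $(a,b)$, $u(a)=u_a$, is $u\in L^1(a,b;X_1)\cap W^{1,1}(a,b;X_0)$ with $Au\in L^1(a,b;X_0)$, $u(a)=u_a$ and $u'+Au=f$ a.e. on $(a,b)$. $A$ has maximal $L^p(a,b,w_\kappa)$-regularity if for every $f\in L^p(a,b,w_\kappa;X_0)$ there exists a unique strong solution $u\in\mathrm{MR}^p(a,b,w_\kappa)$ with $u(a)=0$, and there is a constant $C$ independent of $f$ such that for every $\tau\in(a,b]$ and every strong solution $v\in\mathrm{MR}^p(a,\tau,w_\kappa)$ of $v'+Av=f$ on $(a,\tau)$ with $v(a)=0$, $\|v\|_{\mathrm{MR}^p(a,\tau,w_\kappa)}\le C\|f\|_{L^p(a,\tau,w_\kappa;X_0)}$. The infimum of all such $C$ is $M_{p,\kappa,A}(a,b)$. *)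

theory Defs
  imports "HOL-Analysis.Analysis"
begin

definition strongly_measurable_on :: "real set \<Rightarrow> (real \<Rightarrow> 'x::real_normed_vector) \<Rightarrow> bool" where
  "strongly_measurable_on S f \<longleftrightarrow>
     (\<exists>s. (\<forall>n. simple_function lborel (s n)) \<and>
          (AE t in lborel. t \<in> S \<longrightarrow> (\<lambda>n. s n t) \<longlonglongrightarrow> f t))"

text \<open>Weight w_kappa(t) = |t| powr kappa (never shifted).\<close>
definition Lpw :: "real \<Rightarrow> real \<Rightarrow> real \<Rightarrow> real \<Rightarrow> (real \<Rightarrow> 'x::real_normed_vector) \<Rightarrow> bool" where
  "Lpw a b \<kappa> p f \<longleftrightarrow> strongly_measurable_on {a<..<b} f \<and>
     (\<integral>\<^sup>+ t \<in> {a<..<b}. ennreal (\<bar>t\<bar> powr \<kappa> * norm (f t) powr p) \<partial>lborel) < \<infinity>"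

definition Lpw_norm :: "real \<Rightarrow> real \<Rightarrow> real \<Rightarrow> real \<Rightarrow> (real \<Rightarrow> 'x::real_normed_vector) \<Rightarrow> real" where
  "Lpw_norm a b \<kappa> p f =
     (enn2real (\<integral>\<^sup>+ t \<in> {a<..<b}. ennreal (\<bar>t\<bar> powr \<kappa> * norm (f t) powr p) \<partial>lborel)) powr (1 / p)"

definition test_fun :: "real \<Rightarrow> real \<Rightarrow> (real \<Rightarrow> real) \<Rightarrow> bool" where
  "test_fun a b \<phi> \<longleftrightarrow> (\<forall>n x. ((deriv ^^ n) \<phi>) differentiable (at x)) \<and>
     (\<exists>c d. a < c \<and> c \<le> d \<and> d < b \<and> (\<forall>t. t \<notin> {c..d} \<longrightarrow> \<phi> t = 0))"

definition weak_deriv :: "real \<Rightarrow> real \<Rightarrow> (real \<Rightarrow> 'x::banach) \<Rightarrow> (real \<Rightarrow> 'x) \<Rightarrow> bool" where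
  "weak_deriv a b g g' \<longleftrightarrow> (\<forall>\<phi>. test_fun a b \<phi> \<longrightarrow> (\<exists>I.
      ((\<lambda>t. deriv \<phi> t *\<^sub>R g t) has_integral - I) {a<..<b} \<and>
      ((\<lambda>t. \<phi> t *\<^sub>R g' t) has_integral I) {a<..<b}))"

definition W1pw :: "real \<Rightarrow> real \<Rightarrow> real \<Rightarrow> real \<Rightarrow> (real \<Rightarrow> 'x::banach) \<Rightarrow> bool" where
  "W1pw a b \<kappa> p g \<longleftrightarrow> Lpw a b \<kappa> p g \<and> (\<exists>g'. weak_deriv a b g g' \<and> Lpw a b \<kappa> p g')"

definition W1pw_norm :: "real \<Rightarrow> real \<Rightarrow> real \<Rightarrow> real \<Rightarrow> (real \<Rightarrow> 'x::banach) \<Rightarrow> real" where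
  "W1pw_norm a b \<kappa> p g =
     (Lpw_norm a b \<kappa> p g powr p
      + Lpw_norm a b \<kappa> p (SOME g'. weak_deriv a b g g' \<and> Lpw a b \<kappa> p g') powr p) powr (1 / p)"

text \<open>X_1 is modelled as a Banach space 'x1 embedded into X_0 = 'x0 by J.\<close>
definition MR :: "('x1::banach \<Rightarrow>\<^sub>L 'x0::banach) \<Rightarrow> real \<Rightarrow> real \<Rightarrow> real \<Rightarrow> real \<Rightarrow> (real \<Rightarrow> 'x1) \<Rightarrow> bool" where
  "MR J p \<kappa> a b u \<longleftrightarrow> Lpw a b \<kappa> p u \<and> W1pw a b \<kappa> p (\<lambda>t. blinfun_apply J (u t))"

definition MR_norm :: "('x1::banach \<Rightarrow>\<^sub>L 'x0::banach) \<Rightarrow> real \<Rightarrow> real \<Rightarrow> real \<Rightarrow> real \<Rightarrow> (real \<Rightarrow> 'x1) \<Rightarrow> real" where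
  "MR_norm J p \<kappa> a b u = max (Lpw_norm a b \<kappa> p u) (W1pw_norm a b \<kappa> p (\<lambda>t. blinfun_apply J (u t)))"

definition trace_left :: "real \<Rightarrow> real \<Rightarrow> (real \<Rightarrow> 'x::real_normed_vector) \<Rightarrow> 'x \<Rightarrow> bool" where
  "trace_left a b g x \<longleftrightarrow> (\<exists>h. continuous_on {a..b} h \<and> h a = x \<and>
      (AE t in lborel. t \<in> {a<..<b} \<longrightarrow> g t = h t))"

definition strong_solution ::
  "('x1::banach \<Rightarrow>\<^sub>L 'x0::banach) \<Rightarrow> (real \<Rightarrow> ('x1 \<Rightarrow>\<^sub>L 'x0)) \<Rightarrow> real \<Rightarrow> real \<Rightarrow> (real \<Rightarrow> 'x0) \<Rightarrow> 'x0 \<Rightarrow> (real \<Rightarrow> 'x1) \<Rightarrow> bool" where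
  "strong_solution J A a b f ua u \<longleftrightarrow>
     Lpw a b 0 1 u \<and> Lpw a b 0 1 (\<lambda>t. blinfun_apply J (u t)) \<and>
     Lpw a b 0 1 (\<lambda>t. blinfun_apply (A t) (u t)) \<and>
     (\<exists>u'. Lpw a b 0 1 u' \<and> weak_deriv a b (\<lambda>t. blinfun_apply J (u t)) u' \<and>
        (AE t in lborel. t \<in> {a<..<b} \<longrightarrow> u' t + blinfun_apply (A t) (u t) = f t)) \<and>
     trace_left a b (\<lambda>t. blinfun_apply J (u t)) ua"

definition MR_consts ::
  "('x1::banach \<Rightarrow>\<^sub>L 'x0::banach) \<Rightarrow> (real \<Rightarrow> ('x1 \<Rightarrow>\<^sub>L 'x0)) \<Rightarrow> real \<Rightarrow> real \<Rightarrow> real \<Rightarrow> real \<Rightarrow> real set" where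
  "MR_consts J A p \<kappa> a b = {C. 0 \<le> C \<and>
     (\<forall>f \<tau> v. Lpw a b \<kappa> p f \<longrightarrow> \<tau> \<in> {a<..b} \<longrightarrow> MR J p \<kappa> a \<tau> v \<longrightarrow>
        strong_solution J A a \<tau> f 0 v \<longrightarrow> MR_norm J p \<kappa> a \<tau> v \<le> C * Lpw_norm a \<tau> \<kappa> p f)}"

definition max_reg ::
  "('x1::banach \<Rightarrow>\<^sub>L 'x0::banach) \<Rightarrow> (real \<Rightarrow> ('x1 \<Rightarrow>\<^sub>L 'x0)) \<Rightarrow> real \<Rightarrow> real \<Rightarrow> real \<Rightarrow> real \<Rightarrow> bool" where
  "max_reg J A p \<kappa> a b \<longleftrightarrow>
     (\<forall>f. Lpw a b \<kappa> p f \<longrightarrow>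
        (\<exists>u. MR J p \<kappa> a b u \<and> strong_solution J A a b f 0 u) \<and>
        (\<forall>u v. MR J p \<kappa> a b u \<and> strong_solution J A a b f 0 u \<and>
               MR J p \<kappa> a b v \<and> strong_solution J A a b f 0 v \<longrightarrow>
               (AE t in lborel. t \<in> {a<..<b} \<longrightarrow> u t = v t))) \<and>
     MR_consts J A p \<kappa> a b \<noteq> {}"

definition M_const ::
  "('x1::banach \<Rightarrow>\<^sub>L 'x0::banach) \<Rightarrow> (real \<Rightarrow> ('x1 \<Rightarrow>\<^sub>L 'x0)) \<Rightarrow> real \<Rightarrow> real \<Rightarrow> real \<Rightarrow> real \<Rightarrow> real" where
  "M_const J A p \<kappa> a b = Inf (MR_consts J A p \<kappa> a b)"

end

(*
  Extend f by zero to (0, T) and solve there. On (0, a) the data vanish, so the restricted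
  solution is a solution with zero data and the a priori estimate forces it to vanish; hence it
  has trace 0 at a, and its restriction to (a, b) solves the problem on (a, b).

  For the estimate (and uniqueness) on (a, tau), a solution with trace 0 at a is extended by zero
  to (0, tau). The extension is again a strong solution in MR with the same norm: its weak
  derivative is the zero extension of the weak derivative (test functions are cut off near a,
  and the boundary term vanishes because the trace is 0), and weak derivatives are unique by a
  du Bois-Reymond lemma for Banach-valued functions, which matters because the MR norm is
  defined through a chosen weak derivative.
*)

theory Submission
  imports Defs "HOL-Computational_Algebra.Polynomial" "HOL-Real_Asymp.Real_Asymp"
begin

hide_const (open) Polynomial.content

section \<open>Smooth functions\<close>

definition smooth :: "(real \<Rightarrow> real) \<Rightarrow> bool" where
  "smooth f \<longleftrightarrow> (\<forall>n x. ((deriv ^^ n) f) differentiable (at x))"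

lemma smoothD: "smooth f \<Longrightarrow> (deriv ^^ n) f differentiable (at x)"
  unfolding smooth_def by blast

lemma smooth_has_real_derivative: "smooth f \<Longrightarrow> (f has_real_derivative deriv f x) (at x)"
  using smoothD[of f 0] by (simp add: DERIV_deriv_iff_real_differentiable)

lemma smooth_deriv: "smooth f \<Longrightarrow> smooth (deriv f)"
  unfolding smooth_def by (metis funpow_Suc_right o_apply)

lemma smooth_if_deriv_closed:
  assumes "\<And>k. k \<in> K \<Longrightarrow> (\<forall>x. k differentiable (at x)) \<and> deriv k \<in> K"
    and "f \<in> K"
  shows "smooth f"
proof -
  have "(deriv ^^ n) f \<in> K" for n
    by (induction n) (use assms in auto)
  then show ?thesis unfolding smooth_def using assms(1) by blast
qed

inductive_set fun_algebra :: "(real \<Rightarrow> real) set \<Rightarrow> (real \<Rightarrow> real) set" for S where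
  base: "f \<in> S \<Longrightarrow> f \<in> fun_algebra S"
| const: "(\<lambda>x. c) \<in> fun_algebra S"
| add: "f \<in> fun_algebra S \<Longrightarrow> g \<in> fun_algebra S \<Longrightarrow> (\<lambda>x. f x + g x) \<in> fun_algebra S"
| mult: "f \<in> fun_algebra S \<Longrightarrow> g \<in> fun_algebra S \<Longrightarrow> (\<lambda>x. f x * g x) \<in> fun_algebra S"

lemma deriv_eqI: "(\<And>x. (f has_real_derivative g x) (at x)) \<Longrightarrow> deriv f = g"
  using DERIV_imp_deriv by blast

lemma fun_algebra_deriv_closed:
  assumes "\<And>f. f \<in> S \<Longrightarrow> (\<forall>x. f differentiable (at x)) \<and> deriv f \<in> fun_algebra S"
    and "f \<in> fun_algebra S"
  shows "(\<forall>x. f differentiable (at x)) \<and> deriv f \<in> fun_algebra S"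
  using assms(2)
proof induction
  case (base f)
  then show ?case using assms(1) by blast
next
  case (const c)
  have "deriv (\<lambda>x. c) = (\<lambda>x. 0)" by (rule deriv_eqI) auto
  then show ?case by (auto intro: fun_algebra.const)
next
  case (add f g)
  have "deriv (\<lambda>x. f x + g x) = (\<lambda>x. deriv f x + deriv g x)"
    by (rule deriv_eqI)
       (use add in \<open>auto intro!: derivative_intros simp: DERIV_deriv_iff_real_differentiable\<close>)
  then show ?case using add by (auto intro: fun_algebra.add)
next
  case (mult f g)
  have "deriv (\<lambda>x. f x * g x) = (\<lambda>x. deriv f x * g x + deriv g x * f x)"
    by (rule deriv_eqI, rule DERIV_mult)
       (use mult in \<open>auto simp: DERIV_deriv_iff_real_differentiable\<close>)
  then show ?case using mult by (auto intro!: fun_algebra.add fun_algebra.mult)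
qed

lemma smooth_fun_algebra:
  assumes "\<And>f. f \<in> S \<Longrightarrow> (\<forall>x. f differentiable (at x)) \<and> deriv f \<in> fun_algebra S"
    and "f \<in> fun_algebra S"
  shows "smooth f"
  by (rule smooth_if_deriv_closed[of "fun_algebra S"])
     (use fun_algebra_deriv_closed[OF assms(1)] assms(2) in auto)

text \<open>All derivatives of two smooth functions generate an algebra closed under \<open>deriv\<close>.\<close>

lemma smooth_fun_algebra_derivs:
  assumes "smooth f" "smooth g"
    and "h \<in> fun_algebra (range (\<lambda>n. (deriv ^^ n) f) \<union> range (\<lambda>n. (deriv ^^ n) g))"
  shows "smooth h"
proof (rule smooth_fun_algebra[OF _ assms(3)])
  fix k assume "k \<in> range (\<lambda>n. (deriv ^^ n) f) \<union> range (\<lambda>n. (deriv ^^ n) g)"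
  then obtain n where "k = (deriv ^^ n) f \<or> k = (deriv ^^ n) g" by blast
  then show "(\<forall>x. k differentiable (at x)) \<and>
      deriv k \<in> fun_algebra (range (\<lambda>n. (deriv ^^ n) f) \<union> range (\<lambda>n. (deriv ^^ n) g))"
    using smoothD[OF assms(1)] smoothD[OF assms(2)]
    by (auto intro!: fun_algebra.base range_eqI[where x="Suc n"])
qed

lemma smooth_add: "smooth f \<Longrightarrow> smooth g \<Longrightarrow> smooth (\<lambda>x. f x + g x)"
  by (erule smooth_fun_algebra_derivs, assumption)
     (intro fun_algebra.add fun_algebra.base, auto intro: range_eqI[where x=0])

lemma smooth_mult: "smooth f \<Longrightarrow> smooth g \<Longrightarrow> smooth (\<lambda>x. f x * g x)"
  by (erule smooth_fun_algebra_derivs, assumption)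
     (intro fun_algebra.mult fun_algebra.base, auto intro: range_eqI[where x=0])

lemma smooth_const: "smooth (\<lambda>x. c)"
  by (rule smooth_fun_algebra[of "{}"]) (auto intro: fun_algebra.const)

lemma smooth_id: "smooth (\<lambda>x. x)"
proof (rule smooth_fun_algebra[of "{\<lambda>x. x}"])
  fix f :: "real \<Rightarrow> real" assume "f \<in> {\<lambda>x. x}"
  moreover have "deriv (\<lambda>x::real. x) = (\<lambda>x. 1)" by (rule deriv_eqI) auto
  ultimately show "(\<forall>x. f differentiable (at x)) \<and> deriv f \<in> fun_algebra {\<lambda>x. x}"
    by (auto intro: fun_algebra.const)
qed (auto intro: fun_algebra.base)

lemma smooth_diff:
  assumes "smooth f" "smooth g"
  shows "smooth (\<lambda>x. f x - g x)"
proof -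
  have "smooth (\<lambda>x. f x + (-1) * g x)"
    using assms by (intro smooth_add smooth_mult smooth_const)
  then show ?thesis by simp
qed

lemma smooth_prod:
  fixes n :: nat
  shows "(\<And>k. k < n \<Longrightarrow> smooth (f k)) \<Longrightarrow> smooth (\<lambda>x. \<Prod>k<n. f k x)"
  by (induction n) (simp_all add: smooth_const smooth_mult)

lemma smooth_compose:
  assumes "smooth F" "smooth q"
  shows "smooth (\<lambda>x. F (q x))"
proof -
  let ?S = "range (\<lambda>n x. (deriv ^^ n) F (q x)) \<union> range (\<lambda>n. (deriv ^^ n) q)"
  show ?thesis
  proof (rule smooth_fun_algebra[of ?S])
    fix h assume "h \<in> ?S"
    then consider n where "h = (\<lambda>x. (deriv ^^ n) F (q x))" | n where "h = (deriv ^^ n) q"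
      by blast
    then show "(\<forall>x. h differentiable (at x)) \<and> deriv h \<in> fun_algebra ?S"
    proof cases
      case 1
      have dF: "((deriv ^^ n) F has_real_derivative (deriv ^^ Suc n) F y) (at y)" for y
        using smoothD[OF assms(1)] by (simp add: DERIV_deriv_iff_real_differentiable)
      have D: "(h has_real_derivative (deriv ^^ Suc n) F (q x) * deriv q x) (at x)" for x
        unfolding 1 by (rule DERIV_chain2[OF dF smooth_has_real_derivative[OF assms(2)]])
      then have "deriv h = (\<lambda>x. (deriv ^^ Suc n) F (q x) * deriv q x)"
        by (rule deriv_eqI)
      moreover have "(\<lambda>x. (deriv ^^ Suc n) F (q x) * deriv q x) \<in> fun_algebra ?S"
        by (rule fun_algebra.mult; rule fun_algebra.base)
           (auto intro: range_eqI[where x="Suc n"] range_eqI[where x="Suc 0"])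
      ultimately show ?thesis using D real_differentiable_def by metis
    next
      case 2
      then show ?thesis
        using smoothD[OF assms(2)] by (auto intro!: fun_algebra.base range_eqI[where x="Suc n"])
    qed
  next
    show "(\<lambda>x. F (q x)) \<in> fun_algebra ?S"
      by (rule fun_algebra.base) (auto intro: range_eqI[where x=0])
  qed
qed

lemma smooth_continuous_on: "smooth f \<Longrightarrow> continuous_on S f"
  using smoothD[of f 0] differentiable_imp_continuous_within
  by (auto intro!: continuous_at_imp_continuous_on)

lemma smooth_borel_measurable: "smooth f \<Longrightarrow> f \<in> borel_measurable lborel"
  using smooth_continuous_on[of f UNIV] borel_measurable_continuous_onI by simp

text \<open>The derivative of \<open>poly P (1/y) * exp (-1/y)\<close> has the same shape, and all these
  functions are flat at \<open>0\<close>; so they form a class closed under \<open>deriv\<close>.\<close>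

definition flat_poly :: "real poly \<Rightarrow> real \<Rightarrow> real" where
  "flat_poly P y = (if y > 0 then poly P (1/y) * exp (-1/y) else 0)"

lemma poly_div_exp_tendsto_0: "((\<lambda>z. poly R z / exp z) \<longlongrightarrow> (0::real)) at_top"
proof -
  have "((\<lambda>z. \<Sum>i\<le>degree R. coeff R i * (z ^ i / exp z)) \<longlongrightarrow> (\<Sum>i\<le>degree R. coeff R i * 0)) at_top"
    by (intro tendsto_sum tendsto_mult tendsto_const tendsto_power_div_exp_0)
  then show ?thesis
    by (simp add: poly_altdef sum_divide_distrib)
qed

lemma flat_poly_has_real_derivative_pos:
  assumes "y > 0"
  shows "(flat_poly P has_real_derivative flat_poly (monom 1 2 * (P - pderiv P)) y) (at y)"
proof -
  have d: "((\<lambda>y. poly P (1/y) * exp (-1/y)) has_real_derivative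
      poly (pderiv P) (1/y) * (- 1 / y^2) * exp (-1/y) + poly P (1/y) * (exp (-1/y) * (1/y^2))) (at y)"
    using assms
    by (auto intro!: derivative_eq_intros DERIV_chain2[OF poly_DERIV]
             simp: power2_eq_square field_simps)
  have e: "poly (pderiv P) (1/y) * (- 1 / y^2) * exp (-1/y) + poly P (1/y) * (exp (-1/y) * (1/y^2))
       = flat_poly (monom 1 2 * (P - pderiv P)) y"
    using assms by (simp add: flat_poly_def poly_monom field_simps power2_eq_square)
  show ?thesis
    by (rule has_field_derivative_transform_within_open[OF d[unfolded e], of "{0<..}"])
       (use assms in \<open>auto simp: flat_poly_def\<close>)
qed

lemma flat_poly_has_real_derivative_neg:
  assumes "y < 0"
  shows "(flat_poly P has_real_derivative flat_poly Q y) (at y)"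
proof -
  have "((\<lambda>y. 0) has_real_derivative flat_poly Q y) (at y)" using assms by (simp add: flat_poly_def)
  then show ?thesis
    by (rule has_field_derivative_transform_within_open[of _ _ _ "{..<0}"])
       (use assms in \<open>auto simp: flat_poly_def\<close>)
qed

lemma flat_poly_has_real_derivative_0: "(flat_poly P has_real_derivative flat_poly Q 0) (at 0)"
proof -
  let ?D = "\<lambda>h. (flat_poly P (0 + h) - flat_poly P 0) / h"
  have "(?D \<longlongrightarrow> 0) (at_left 0)"
  proof (rule Lim_transform_eventually[OF tendsto_const])
    show "\<forall>\<^sub>F h in at_left 0. 0 = ?D h"
      by (auto simp: eventually_at_left_field flat_poly_def intro: exI[of _ "-1"])
  qed
  moreover have "(?D \<longlongrightarrow> 0) (at_right 0)"
  proof -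
    have "((\<lambda>h. poly (P * [:0,1:]) (inverse h) / exp (inverse h)) \<longlongrightarrow> 0) (at_right (0::real))"
      by (rule filterlim_compose[OF poly_div_exp_tendsto_0 filterlim_inverse_at_top_right])
    then show ?thesis
    proof (rule Lim_transform_eventually)
      show "\<forall>\<^sub>F h in at_right 0. poly (P * [:0, 1:]) (inverse h) / exp (inverse h) = ?D h"
        by (auto simp: eventually_at_right_field flat_poly_def exp_minus field_simps
                 intro!: exI[of _ 1])
    qed
  qed
  ultimately have "(?D \<longlongrightarrow> 0) (at 0)"
    by (simp add: filterlim_at_split)
  then show ?thesis by (simp add: DERIV_def flat_poly_def)
qed

lemma flat_poly_has_real_derivative:
  "(flat_poly P has_real_derivative flat_poly (monom 1 2 * (P - pderiv P)) y) (at y)"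
  using flat_poly_has_real_derivative_pos flat_poly_has_real_derivative_neg
    flat_poly_has_real_derivative_0
  by (metis linorder_neqE_linordered_idom)

lemma smooth_flat_poly: "smooth (flat_poly P)"
proof (rule smooth_if_deriv_closed[of "range flat_poly"])
  fix k assume "k \<in> range flat_poly"
  then obtain P where k: "k = flat_poly P" by blast
  have "deriv k = flat_poly (monom 1 2 * (P - pderiv P))"
    unfolding k by (rule deriv_eqI[OF flat_poly_has_real_derivative])
  then show "(\<forall>x. k differentiable (at x)) \<and> deriv k \<in> range flat_poly"
    using flat_poly_has_real_derivative k real_differentiable_def by blast
qed auto

definition flat_step :: "real \<Rightarrow> real" where
  "flat_step y = (if y > 0 then exp (-1/y) else 0)"

lemma flat_step_eq_flat_poly: "flat_step = flat_poly 1"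
  by (auto simp: flat_step_def flat_poly_def)

lemma smooth_flat_step: "smooth flat_step"
  by (simp add: flat_step_eq_flat_poly smooth_flat_poly)

lemma deriv_flat_step_nonneg: "0 \<le> deriv flat_step y"
proof -
  have "flat_poly (monom 1 2 * (1 - pderiv 1)) y = (if y > 0 then exp (-1/y) / y^2 else 0)"
    by (simp add: flat_poly_def poly_monom power_one_over)
  then show ?thesis
    using DERIV_imp_deriv[OF flat_poly_has_real_derivative[of 1 y]]
    by (simp add: flat_step_eq_flat_poly)
qed

lemma flat_step_nonneg: "0 \<le> flat_step y"
  by (simp add: flat_step_def)

lemma flat_step_le_1: "flat_step y \<le> 1"
  by (simp add: flat_step_def)

lemma flat_step_eq_0: "y \<le> 0 \<Longrightarrow> flat_step y = 0"
  by (simp add: flat_step_def)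

lemma flat_step_tendsto_1: "(flat_step \<longlongrightarrow> 1) at_top"
proof -
  have "(inverse \<longlongrightarrow> (0::real)) at_top"
    by (rule tendsto_inverse_0_at_top[OF filterlim_ident])
  from tendsto_exp[OF tendsto_minus[OF this]]
  have "((\<lambda>y::real. exp (- inverse y)) \<longlongrightarrow> 1) at_top" by simp
  then show ?thesis
  proof (rule Lim_transform_eventually[where f="\<lambda>y. exp (- inverse y)", simplified])
    show "\<forall>\<^sub>F x in at_top. exp (- inverse x) = flat_step x"
      using eventually_gt_at_top[of 0]
      by eventually_elim (simp add: flat_step_def divide_inverse)
  qed
qed

lemma flat_step_scaled_tendsto_1: "c > 0 \<Longrightarrow> (\<lambda>n. flat_step (real n * c - e)) \<longlonglongrightarrow> 1"
  by (rule filterlim_compose[OF flat_step_tendsto_1]) real_asymp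

definition cutoff :: "real \<Rightarrow> nat \<Rightarrow> real \<Rightarrow> real" where
  "cutoff a m t = flat_step (real m * (t - a) - 1)"

lemma smooth_cutoff: "smooth (cutoff a m)"
  unfolding cutoff_def
  by (intro smooth_compose[OF smooth_flat_step] smooth_diff smooth_mult smooth_const smooth_id)

lemma cutoff_nonneg: "0 \<le> cutoff a m t"
  unfolding cutoff_def using flat_step_nonneg by auto

lemma cutoff_le_1: "cutoff a m t \<le> 1"
  unfolding cutoff_def using flat_step_le_1 by auto

lemma cutoff_eq_0: "0 < m \<Longrightarrow> t \<le> a + 1 / real m \<Longrightarrow> cutoff a m t = 0"
  unfolding cutoff_def by (intro flat_step_eq_0) (simp add: field_simps)

lemma deriv_cutoff: "deriv (cutoff a m) t = real m * deriv flat_step (real m * (t - a) - 1)"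
proof -
  have "((\<lambda>t. flat_step (real m * (t - a) - 1)) has_real_derivative
      deriv flat_step (real m * (t - a) - 1) * real m) (at t)"
    by (rule DERIV_chain2[OF smooth_has_real_derivative[OF smooth_flat_step]])
       (auto intro!: derivative_eq_intros)
  then show ?thesis unfolding cutoff_def by (simp add: DERIV_imp_deriv mult.commute)
qed

lemma deriv_cutoff_nonneg: "0 \<le> deriv (cutoff a m) t"
  by (simp add: deriv_cutoff deriv_flat_step_nonneg)

lemma continuous_on_deriv_cutoff: "continuous_on S (deriv (cutoff a m))"
  using smooth_continuous_on[OF smooth_deriv[OF smooth_cutoff]] .

lemma cutoff_tendsto_1:
  assumes "t > a"
  shows "(\<lambda>n. cutoff a (n + K) t) \<longlonglongrightarrow> 1"
proof -
  have "filterlim (\<lambda>n. real (n + K) * (t - a) - 1) at_top sequentially"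
    using assms by real_asymp
  from filterlim_compose[OF flat_step_tendsto_1 this] show ?thesis by (simp add: cutoff_def)
qed

lemma cutoff_fundamental_theorem:
  assumes "u \<le> v"
  shows "(deriv (cutoff a m) has_integral (cutoff a m v - cutoff a m u)) {u..v}"
proof (rule fundamental_theorem_of_calculus[OF assms])
  fix x
  show "(cutoff a m has_vector_derivative deriv (cutoff a m) x) (at x within {u..v})"
    using smooth_has_real_derivative[OF smooth_cutoff, of a m x]
    by (simp add: has_real_derivative_iff_has_vector_derivative[symmetric]
                  has_field_derivative_at_within)
qed

section \<open>Henstock--Kurzweil integrals\<close>

lemma norm_riemann_sum_diff_le:
  fixes f g :: "real \<Rightarrow> 'a::banach"
  assumes D: "D tagged_division_of {c..d}"
    and le: "\<And>x. x \<in> {c..d} \<Longrightarrow> norm (f x - g x) \<le> e x"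
  shows "norm ((\<Sum>(x,K)\<in>D. content K *\<^sub>R f x) - (\<Sum>(x,K)\<in>D. content K *\<^sub>R g x))
          \<le> (\<Sum>(x,K)\<in>D. content K *\<^sub>R e x)"
proof -
  have "(\<Sum>(x,K)\<in>D. content K *\<^sub>R f x) - (\<Sum>(x,K)\<in>D. content K *\<^sub>R g x)
        = (\<Sum>(x,K)\<in>D. content K *\<^sub>R (f x - g x))"
    by (simp add: split_def sum_subtractf scaleR_diff_right)
  also have "norm \<dots> \<le> (\<Sum>(x,K)\<in>D. norm (content K *\<^sub>R (f x - g x)))"
    by (rule norm_sum[THEN order_trans]) (simp add: split_def)
  also have "\<dots> \<le> (\<Sum>(x,K)\<in>D. content K *\<^sub>R e x)"
  proof (rule sum_mono, clarify)
    fix x K assume "(x, K) \<in> D"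
    then have "norm (f x - g x) \<le> e x" using D le by blast
    then show "norm (content K *\<^sub>R (f x - g x)) \<le> content K *\<^sub>R e x"
      by (simp add: mult_left_mono)
  qed
  finally show ?thesis .
qed

lemma norm_diff_triangle_le3:
  fixes A B C D :: "'a::real_normed_vector"
  shows "norm (A - B) \<le> norm (A - C) + norm (C - D) + norm (B - D)"
proof -
  have "norm (A - B) \<le> norm ((A - C) + (C - D)) + norm (B - D)"
    using norm_triangle_ineq4[of "(A - C) + (C - D)" "B - D"] by simp
  then show ?thesis using norm_triangle_ineq[of "A - C" "C - D"] by simp
qed

text \<open>The codomain is an arbitrary Banach space, so the dominated convergence theorem of the
  library for Henstock--Kurzweil integrals (stated for Euclidean spaces) does not apply.\<close>

lemma integrable_on_approx:
  fixes f :: "real \<Rightarrow> 'a::banach" and g :: "nat \<Rightarrow> real \<Rightarrow> 'a" and e :: "nat \<Rightarrow> real \<Rightarrow> real"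
  assumes gi: "\<And>n. g n integrable_on {c..d}" and ei: "\<And>n. e n integrable_on {c..d}"
    and le: "\<And>n x. x \<in> {c..d} \<Longrightarrow> norm (f x - g n x) \<le> e n x"
    and lim: "(\<lambda>n. integral {c..d} (e n)) \<longlonglongrightarrow> 0"
  shows "f integrable_on {c..d}"
  unfolding box_real(2)[symmetric] integrable_Cauchy
proof (intro allI impI)
  let ?S = "\<lambda>h D. (\<Sum>(x,K)\<in>D. content K *\<^sub>R h x)"
  fix \<epsilon> :: real assume "\<epsilon> > 0"
  then obtain n where n: "norm (integral {c..d} (e n)) < \<epsilon>/4"
    using lim[THEN LIMSEQ_D, of "\<epsilon>/4"] by auto
  from gi[of n] obtain \<gamma>1 where g1: "gauge \<gamma>1" and
    c1: "\<And>D1 D2. D1 tagged_division_of (cbox c d) \<Longrightarrow> \<gamma>1 fine D1 \<Longrightarrow>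
        D2 tagged_division_of (cbox c d) \<Longrightarrow> \<gamma>1 fine D2 \<Longrightarrow>
        norm (?S (g n) D1 - ?S (g n) D2) < \<epsilon>/4"
    unfolding box_real(2)[symmetric] integrable_Cauchy using \<open>\<epsilon> > 0\<close>
    by (meson divide_pos_pos zero_less_numeral)
  have "(e n has_integral integral {c..d} (e n)) {c..d}" using ei by blast
  then obtain \<gamma>2 where g2: "gauge \<gamma>2" and
    c2: "\<And>D. D tagged_division_of {c..d} \<Longrightarrow> \<gamma>2 fine D \<Longrightarrow>
        norm (?S (e n) D - integral {c..d} (e n)) < \<epsilon>/8"
    unfolding has_integral_real using \<open>\<epsilon> > 0\<close> by (meson divide_pos_pos zero_less_numeral)
  have close: "norm (?S f D - ?S (g n) D) < 3*\<epsilon>/8"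
    if D: "D tagged_division_of {c..d}" "\<gamma>2 fine D" for D
  proof -
    have "norm (?S f D - ?S (g n) D) \<le> ?S (e n) D"
      by (rule norm_riemann_sum_diff_le[OF D(1) le])
    also have "\<dots> < integral {c..d} (e n) + \<epsilon>/8"
      using c2[OF D] unfolding real_norm_def by linarith
    finally show ?thesis using n by simp
  qed
  show "\<exists>\<gamma>. gauge \<gamma> \<and> (\<forall>D1 D2. D1 tagged_division_of cbox c d \<and> \<gamma> fine D1 \<and>
          D2 tagged_division_of cbox c d \<and> \<gamma> fine D2 \<longrightarrow> norm (?S f D1 - ?S f D2) < \<epsilon>)"
  proof (intro exI conjI allI impI)
    show "gauge (\<lambda>x. \<gamma>1 x \<inter> \<gamma>2 x)" using g1 g2 by (rule gauge_Int)
  next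
    fix D1 D2 assume "D1 tagged_division_of cbox c d \<and> (\<lambda>x. \<gamma>1 x \<inter> \<gamma>2 x) fine D1 \<and>
          D2 tagged_division_of cbox c d \<and> (\<lambda>x. \<gamma>1 x \<inter> \<gamma>2 x) fine D2"
    then have H1: "D1 tagged_division_of {c..d}" "\<gamma>1 fine D1" "\<gamma>2 fine D1"
      and H2: "D2 tagged_division_of {c..d}" "\<gamma>1 fine D2" "\<gamma>2 fine D2"
      by (auto simp: fine_Int)
    have "norm (?S f D1 - ?S f D2) \<le> norm (?S f D1 - ?S (g n) D1)
        + norm (?S (g n) D1 - ?S (g n) D2) + norm (?S f D2 - ?S (g n) D2)"
      by (rule norm_diff_triangle_le3)
    also have "\<dots> < 3*\<epsilon>/8 + \<epsilon>/4 + 3*\<epsilon>/8"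
      using close[OF H1(1,3)] close[OF H2(1,3)]
        c1[OF H1(1)[folded box_real(2)] H1(2) H2(1)[folded box_real(2)] H2(2)]
      by linarith
    finally show "norm (?S f D1 - ?S f D2) < \<epsilon>" by simp
  qed
qed

lemma integral_tendsto_approx:
  fixes f :: "real \<Rightarrow> 'a::banach" and g :: "nat \<Rightarrow> real \<Rightarrow> 'a" and e :: "nat \<Rightarrow> real \<Rightarrow> real"
  assumes gi: "\<And>n. g n integrable_on {c..d}" and ei: "\<And>n. e n integrable_on {c..d}"
    and le: "\<And>n x. x \<in> {c..d} \<Longrightarrow> norm (f x - g n x) \<le> e n x"
    and lim: "(\<lambda>n. integral {c..d} (e n)) \<longlonglongrightarrow> 0"
  shows "(\<lambda>n. integral {c..d} (g n)) \<longlonglongrightarrow> integral {c..d} f"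
proof -
  have fi: "f integrable_on {c..d}" by (rule integrable_on_approx[OF gi ei le lim])
  have "norm (integral {c..d} (g n) - integral {c..d} f) \<le> integral {c..d} (e n)" for n
  proof -
    have "norm (integral {c..d} (g n) - integral {c..d} f) = norm (integral {c..d} (\<lambda>x. f x - g n x))"
      using fi gi[of n] by (simp add: integral_diff norm_minus_commute)
    also have "\<dots> \<le> integral {c..d} (e n)"
      by (rule integral_norm_bound_integral) (use fi gi ei le in \<open>auto intro: integrable_diff\<close>)
    finally show ?thesis .
  qed
  then have "(\<lambda>n. integral {c..d} (g n) - integral {c..d} f) \<longlonglongrightarrow> 0"
    by (intro Lim_null_comparison[OF _ lim] always_eventually) auto
  then show ?thesis by (rule LIM_zero_cancel)
qed

lemma AE_lborel_negligible:
  assumes "AE x in lborel. P x"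
  obtains N :: "real set" where "negligible N" "\<And>x. x \<notin> N \<Longrightarrow> P x"
proof -
  obtain N where N: "\<And>x. x \<in> space lborel - N \<Longrightarrow> P x" "N \<in> null_sets lborel"
    using AE_E3[OF assms] by blast
  have "negligible N" unfolding negligible_iff_null_sets using N(2) by (rule null_sets_completionI)
  then show ?thesis using that N(1) by auto
qed

lemma integral_tendsto_approx_AE:
  fixes f :: "real \<Rightarrow> 'a::banach" and g :: "nat \<Rightarrow> real \<Rightarrow> 'a" and e :: "nat \<Rightarrow> real \<Rightarrow> real"
  assumes gi: "\<And>n. g n integrable_on {c..d}" and ei: "\<And>n. e n integrable_on {c..d}"
    and le: "AE x in lborel. x \<in> {c..d} \<longrightarrow> (\<forall>n. norm (f x - g n x) \<le> e n x)"
    and lim: "(\<lambda>n. integral {c..d} (e n)) \<longlonglongrightarrow> 0"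
  shows "f integrable_on {c..d}" "(\<lambda>n. integral {c..d} (g n)) \<longlonglongrightarrow> integral {c..d} f"
proof -
  obtain N where N: "negligible N" "\<And>x. x \<notin> N \<Longrightarrow> x \<in> {c..d} \<longrightarrow> (\<forall>n. norm (f x - g n x) \<le> e n x)"
    using AE_lborel_negligible[OF le] by blast
  define e' where "e' n x = (if x \<in> N then norm (f x - g n x) else e n x)" for n x
  have e'i: "e' n integrable_on {c..d}" for n
    by (rule integrable_spike[OF ei N(1)]) (auto simp: e'_def)
  have e'v: "integral {c..d} (e' n) = integral {c..d} (e n)" for n
    by (rule integral_spike[OF N(1)]) (auto simp: e'_def)
  have le': "norm (f x - g n x) \<le> e' n x" if "x \<in> {c..d}" for n x
    using N(2)[of x] that by (auto simp: e'_def)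
  show "f integrable_on {c..d}" "(\<lambda>n. integral {c..d} (g n)) \<longlonglongrightarrow> integral {c..d} f"
    using integrable_on_approx[OF gi e'i le'] integral_tendsto_approx[OF gi e'i le'] lim
    by (auto simp: e'v)
qed

lemma integral_tendsto_0_dominated:
  fixes e :: "nat \<Rightarrow> real \<Rightarrow> real" and w :: "real \<Rightarrow> real"
  assumes em: "\<And>n. e n \<in> borel_measurable lborel"
    and wi: "set_integrable lborel {c..d} w"
    and le: "\<And>n x. x \<in> {c..d} \<Longrightarrow> \<bar>e n x\<bar> \<le> w x"
    and lim: "AE x in lborel. x \<in> {c..d} \<longrightarrow> (\<lambda>n. e n x) \<longlonglongrightarrow> 0"
  shows "\<And>n. e n integrable_on {c..d}" "(\<lambda>n. integral {c..d} (e n)) \<longlonglongrightarrow> 0"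
proof -
  note em[measurable]
  have wi': "integrable lborel (\<lambda>x. indicator {c..d} x * w x)"
    using wi by (simp add: set_integrable_def)
  have si: "set_integrable lborel {c..d} (e n)" for n
    unfolding set_integrable_def
    by (rule Bochner_Integration.integrable_bound[OF wi'], measurable)
       (use le in \<open>auto intro!: AE_I2 order_trans[OF le abs_ge_self] simp: indicator_def\<close>)
  show "e n integrable_on {c..d}" for n using set_borel_integral_eq_integral(1)[OF si] .
  have "(\<lambda>n. integral\<^sup>L lborel (\<lambda>x. indicator {c..d} x * e n x))
      \<longlonglongrightarrow> integral\<^sup>L lborel (\<lambda>x::real. 0::real)"
  proof (rule integral_dominated_convergence[OF _ _ wi'])
    show "AE x in lborel. (\<lambda>n. indicator {c..d} x * e n x) \<longlonglongrightarrow> 0"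
      using lim by eventually_elim (auto simp: indicator_def)
    show "AE x in lborel. norm (indicator {c..d} x * e n x) \<le> indicator {c..d} x * w x" for n
      using le by (intro AE_I2) (auto simp: indicator_def)
  qed measurable
  moreover have "integral\<^sup>L lborel (\<lambda>x. indicator {c..d} x * e n x) = integral {c..d} (e n)" for n
    using set_borel_integral_eq_integral(2)[OF si[of n]] by (simp add: set_lebesgue_integral_def)
  ultimately show "(\<lambda>n. integral {c..d} (e n)) \<longlonglongrightarrow> 0" by simp
qed

lemma has_integral_AE_cong:
  fixes f g :: "real \<Rightarrow> 'a::banach"
  assumes "AE x in lborel. x \<in> S \<longrightarrow> f x = g x"
  shows "(f has_integral I) S \<longleftrightarrow> (g has_integral I) S"
proof -
  obtain N where N: "negligible N" "\<And>x. x \<notin> N \<Longrightarrow> x \<in> S \<longrightarrow> f x = g x"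
    using AE_lborel_negligible[OF assms] by blast
  show ?thesis by (rule has_integral_spike_eq[OF N(1)]) (use N(2) in auto)
qed

lemma integrable_on_AE_cong:
  fixes f g :: "real \<Rightarrow> 'a::banach"
  assumes "AE x in lborel. x \<in> S \<longrightarrow> f x = g x"
  shows "f integrable_on S \<longleftrightarrow> g integrable_on S"
  using has_integral_AE_cong[OF assms] unfolding integrable_on_def by blast

lemma integral_AE_cong:
  fixes f g :: "real \<Rightarrow> 'a::banach"
  assumes "AE x in lborel. x \<in> S \<longrightarrow> f x = g x"
  shows "integral S f = integral S g"
  using has_integral_AE_cong[OF assms] integrable_on_AE_cong[OF assms]
  by (metis integrable_integral integral_unique not_integrable_integral)

lemma has_integral_supp_eq:
  fixes f :: "real \<Rightarrow> 'a::banach"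
  assumes "negligible N" "\<And>x. x \<in> T - S \<Longrightarrow> x \<notin> N \<Longrightarrow> f x = 0"
    "\<And>x. x \<in> S - T \<Longrightarrow> x \<notin> N \<Longrightarrow> f x = 0"
  shows "(f has_integral I) S \<longleftrightarrow> (f has_integral I) T"
proof (rule has_integral_spike_set_eq)
  show "negligible {x \<in> S - T. f x \<noteq> 0}" "negligible {x \<in> T - S. f x \<noteq> 0}"
    using assms by (auto intro: negligible_subset[OF assms(1)])
qed

lemma has_integral_subset_eq:
  fixes f :: "real \<Rightarrow> 'a::banach"
  assumes "S \<subseteq> T" "\<And>x. x \<in> T - S \<Longrightarrow> f x = 0"
  shows "(f has_integral I) S \<longleftrightarrow> (f has_integral I) T"
  by (rule has_integral_supp_eq[OF negligible_empty]) (use assms in auto)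

section \<open>Strongly measurable and weighted \<open>L\<^sup>p\<close> functions\<close>

lemma strongly_measurable_on_AE_borel:
  fixes f :: "real \<Rightarrow> 'a::real_normed_vector"
  assumes "strongly_measurable_on S f" "continuous_on UNIV \<Phi>"
  obtains r :: "real \<Rightarrow> real" where "r \<in> borel_measurable lborel" "AE t in lborel. t \<in> S \<longrightarrow> \<Phi> (f t) = r t"
proof -
  from assms(1) obtain s where s: "\<And>n. simple_function lborel (s n)"
    and lim: "AE t in lborel. t \<in> S \<longrightarrow> (\<lambda>n. s n t) \<longlonglongrightarrow> f t"
    unfolding strongly_measurable_on_def by blast
  define r where "r t = lim (\<lambda>n. \<Phi> (s n t))" for t
  have m: "(\<lambda>t. \<Phi> (s n t)) \<in> borel_measurable lborel" for n
    using borel_measurable_simple_function[OF simple_function_compose[OF s[of n], of \<Phi>]] by (simp add: o_def)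
  have "r \<in> borel_measurable lborel" unfolding r_def by (rule borel_measurable_lim_metric[OF m])
  moreover have "AE t in lborel. t \<in> S \<longrightarrow> \<Phi> (f t) = r t"
    using lim
  proof eventually_elim
    case (elim t)
    show ?case
    proof
      assume "t \<in> S"
      then have "(\<lambda>n. s n t) \<longlonglongrightarrow> f t" using elim by blast
      moreover have "isCont \<Phi> (f t)" using assms(2) by (simp add: continuous_on_eq_continuous_at)
      ultimately have "(\<lambda>n. \<Phi> (s n t)) \<longlonglongrightarrow> \<Phi> (f t)" by (rule isCont_tendsto_compose[rotated])
      then show "\<Phi> (f t) = r t" unfolding r_def by (simp add: limI)
    qed
  qed
  ultimately show ?thesis using that by blast
qed

lemma strongly_measurable_on_AE_separable:
  fixes f :: "real \<Rightarrow> 'a::real_normed_vector"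
  assumes "strongly_measurable_on S f"
  obtains C where "countable C" "AE t in lborel. t \<in> S \<longrightarrow> f t \<in> closure C"
proof -
  from assms(1) obtain s where s: "\<And>n. simple_function lborel (s n)"
    and lim: "AE t in lborel. t \<in> S \<longrightarrow> (\<lambda>n. s n t) \<longlonglongrightarrow> f t"
    unfolding strongly_measurable_on_def by blast
  define C where "C = (\<Union>n. range (s n))"
  have "finite (range (s n))" for n using simple_functionD(1)[OF s[of n]] by simp
  then have "countable C" unfolding C_def by (auto intro: countable_finite)
  moreover have "AE t in lborel. t \<in> S \<longrightarrow> f t \<in> closure C"
    using lim
  proof eventually_elim
    case (elim t)
    show ?case
    proof
      assume "t \<in> S"
      then have "(\<lambda>n. s n t) \<longlonglongrightarrow> f t" using elim by blast
      moreover have "\<forall>n. s n t \<in> C" unfolding C_def by blast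
      ultimately show "f t \<in> closure C" unfolding closure_sequential
        by (intro exI[where x="\<lambda>n. s n t"] conjI) auto
    qed
  qed
  ultimately show ?thesis using that by blast
qed

lemma strongly_measurable_on_subset: "S' \<subseteq> S \<Longrightarrow> strongly_measurable_on S f \<Longrightarrow> strongly_measurable_on S' f"
  unfolding strongly_measurable_on_def
proof (elim exE conjE)
  fix s assume "S' \<subseteq> S" "\<forall>n. simple_function lborel (s n)" "AE t in lborel. t \<in> S \<longrightarrow> (\<lambda>n. s n t) \<longlonglongrightarrow> f t"
  then show "\<exists>s. (\<forall>n. simple_function lborel (s n)) \<and> (AE t in lborel. t \<in> S' \<longrightarrow> (\<lambda>n. s n t) \<longlonglongrightarrow> f t)"
    by (intro exI[of _ s]) (auto elim!: AE_mp)
qed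

lemma strongly_measurable_on_cong: "(\<And>t. t \<in> S \<Longrightarrow> f t = g t) \<Longrightarrow> strongly_measurable_on S f \<Longrightarrow> strongly_measurable_on S g"
  unfolding strongly_measurable_on_def
proof (elim exE conjE)
  fix s assume "\<And>t. t \<in> S \<Longrightarrow> f t = g t" "\<forall>n. simple_function lborel (s n)" "AE t in lborel. t \<in> S \<longrightarrow> (\<lambda>n. s n t) \<longlonglongrightarrow> f t"
  then show "\<exists>s. (\<forall>n. simple_function lborel (s n)) \<and> (AE t in lborel. t \<in> S \<longrightarrow> (\<lambda>n. s n t) \<longlonglongrightarrow> g t)"
    by (intro exI[of _ s]) (auto elim!: AE_mp)
qed

lemma strongly_measurable_on_zero: "strongly_measurable_on S (\<lambda>t. 0)"
  unfolding strongly_measurable_on_def by (auto intro!: exI[of _ "\<lambda>n t. 0"])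

lemma strongly_measurable_on_diff:
  fixes f g :: "real \<Rightarrow> 'a::real_normed_vector"
  assumes "strongly_measurable_on S f" "strongly_measurable_on S g"
  shows "strongly_measurable_on S (\<lambda>t. f t - g t)"
proof -
  from assms(1) obtain s where s: "\<And>n. simple_function lborel (s n)"
    and lim: "AE t in lborel. t \<in> S \<longrightarrow> (\<lambda>n. s n t) \<longlonglongrightarrow> f t"
    unfolding strongly_measurable_on_def by blast
  from assms(2) obtain s' where s': "\<And>n. simple_function lborel (s' n)"
    and lim': "AE t in lborel. t \<in> S \<longrightarrow> (\<lambda>n. s' n t) \<longlonglongrightarrow> g t"
    unfolding strongly_measurable_on_def by blast
  show ?thesis unfolding strongly_measurable_on_def
  proof (intro exI conjI allI)
    show "simple_function lborel (\<lambda>t. s n t - s' n t)" for n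
      by (rule simple_function_compose2[OF s s'])
    show "AE t in lborel. t \<in> S \<longrightarrow> (\<lambda>n. s n t - s' n t) \<longlonglongrightarrow> f t - g t"
      using lim lim' by eventually_elim (auto intro: tendsto_diff)
  qed
qed

lemma strongly_measurable_on_zero_extension:
  fixes f :: "real \<Rightarrow> 'a::real_normed_vector"
  assumes "B \<in> sets lborel" "B \<subseteq> S" "strongly_measurable_on S f"
  shows "strongly_measurable_on T (\<lambda>t. if t \<in> B then f t else 0)"
proof -
  from assms(3) obtain s where s: "\<And>n. simple_function lborel (s n)"
    and lim: "AE t in lborel. t \<in> S \<longrightarrow> (\<lambda>n. s n t) \<longlonglongrightarrow> f t"
    unfolding strongly_measurable_on_def by blast
  show ?thesis unfolding strongly_measurable_on_def
  proof (intro exI conjI allI)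
    show "simple_function lborel (\<lambda>t. if t \<in> B then s n t else 0)" for n
      by (rule simple_function_If[OF s]) (use assms(1) in auto)
    show "AE t in lborel. t \<in> T \<longrightarrow> (\<lambda>n. if t \<in> B then s n t else 0) \<longlonglongrightarrow> (if t \<in> B then f t else 0)"
      using lim by eventually_elim (use assms(2) in auto)
  qed
qed

lemma Lpw_subinterval:
  assumes "Lpw a b \<kappa> p f" "a \<le> a'" "b' \<le> b"
  shows "Lpw a' b' \<kappa> p f"
proof -
  have "(\<integral>\<^sup>+ t \<in> {a'<..<b'}. ennreal (\<bar>t\<bar> powr \<kappa> * norm (f t) powr p) \<partial>lborel)
      \<le> (\<integral>\<^sup>+ t \<in> {a<..<b}. ennreal (\<bar>t\<bar> powr \<kappa> * norm (f t) powr p) \<partial>lborel)"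
    by (rule nn_integral_mono) (use assms(2,3) in \<open>auto simp: indicator_def\<close>)
  moreover have "{a'<..<b'} \<subseteq> {a<..<b}" using assms(2,3) by auto
  ultimately show ?thesis using assms(1) strongly_measurable_on_subset[of "{a'<..<b'}" "{a<..<b}" f] unfolding Lpw_def
    by (auto intro: le_less_trans)
qed

lemma Lpw_cong:
  assumes "\<And>t. t \<in> {a<..<b} \<Longrightarrow> f t = g t"
  shows "Lpw a b \<kappa> p f \<longleftrightarrow> Lpw a b \<kappa> p g" "Lpw_norm a b \<kappa> p f = Lpw_norm a b \<kappa> p g"
proof -
  have "(\<integral>\<^sup>+ t \<in> {a<..<b}. ennreal (\<bar>t\<bar> powr \<kappa> * norm (f t) powr p) \<partial>lborel)
      = (\<integral>\<^sup>+ t \<in> {a<..<b}. ennreal (\<bar>t\<bar> powr \<kappa> * norm (g t) powr p) \<partial>lborel)"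
    by (rule nn_integral_cong) (use assms in \<open>auto simp: indicator_def\<close>)
  then show "Lpw a b \<kappa> p f \<longleftrightarrow> Lpw a b \<kappa> p g" "Lpw_norm a b \<kappa> p f = Lpw_norm a b \<kappa> p g"
    using strongly_measurable_on_cong[of "{a<..<b}" f g] strongly_measurable_on_cong[of "{a<..<b}" g f] assms
    unfolding Lpw_def Lpw_norm_def by auto
qed

lemma Lpw_zero_extension:
  assumes "Lpw a b \<kappa> p f" "0 < p"
  shows "Lpw a0 b0 \<kappa> p (\<lambda>t. if t \<in> {a<..<b} then f t else 0)"
proof -
  have "(\<integral>\<^sup>+ t \<in> {a0<..<b0}. ennreal (\<bar>t\<bar> powr \<kappa> * norm (if t \<in> {a<..<b} then f t else 0) powr p) \<partial>lborel)
      \<le> (\<integral>\<^sup>+ t \<in> {a<..<b}. ennreal (\<bar>t\<bar> powr \<kappa> * norm (f t) powr p) \<partial>lborel)"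
    by (rule nn_integral_mono) (use assms(2) in \<open>auto simp: indicator_def\<close>)
  moreover have "strongly_measurable_on {a0<..<b0} (\<lambda>t. if t \<in> {a<..<b} then f t else 0)"
    by (rule strongly_measurable_on_zero_extension) (use assms(1) in \<open>auto simp: Lpw_def\<close>)
  ultimately show ?thesis using assms unfolding Lpw_def
    by (auto simp: top.not_eq_extremum intro: le_less_trans)
qed

lemma Lpw_norm_zero_extension:
  assumes "0 < p" "a0 \<le> a" "b \<le> b0"
  shows "Lpw_norm a0 b0 \<kappa> p (\<lambda>t. if t \<in> {a<..<b} then f t else 0) = Lpw_norm a b \<kappa> p f"
proof -
  have "(\<integral>\<^sup>+ t \<in> {a0<..<b0}. ennreal (\<bar>t\<bar> powr \<kappa> * norm (if t \<in> {a<..<b} then f t else 0) powr p) \<partial>lborel)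
      = (\<integral>\<^sup>+ t \<in> {a<..<b}. ennreal (\<bar>t\<bar> powr \<kappa> * norm (f t) powr p) \<partial>lborel)"
    by (rule nn_integral_cong) (use assms in \<open>auto simp: indicator_def\<close>)
  then show ?thesis unfolding Lpw_norm_def by simp
qed

lemma Lpw_zero:
  assumes "0 < p"
  shows "Lpw a b \<kappa> p (\<lambda>t. 0)" "Lpw_norm a b \<kappa> p (\<lambda>t. 0) = 0"
  using assms by (auto simp: Lpw_def Lpw_norm_def strongly_measurable_on_zero)

lemma Lpw_norm_nonneg: "0 \<le> Lpw_norm a b \<kappa> p f"
  by (simp add: Lpw_norm_def)

lemma Lpw_norm_AE_cong:
  assumes "AE t in lborel. t \<in> {a<..<b} \<longrightarrow> f t = g t"
  shows "Lpw_norm a b \<kappa> p f = Lpw_norm a b \<kappa> p g"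
proof -
  have "(\<integral>\<^sup>+ t \<in> {a<..<b}. ennreal (\<bar>t\<bar> powr \<kappa> * norm (f t) powr p) \<partial>lborel)
      = (\<integral>\<^sup>+ t \<in> {a<..<b}. ennreal (\<bar>t\<bar> powr \<kappa> * norm (g t) powr p) \<partial>lborel)"
    by (rule nn_integral_cong_AE) (use assms in \<open>eventually_elim, auto simp: indicator_def\<close>)
  then show ?thesis unfolding Lpw_norm_def by simp
qed

lemma Lpw_extend_by_0_left:
  assumes "Lpw a \<tau> \<kappa> p f" "0 < p" "0 \<le> a"
  shows "Lpw 0 \<tau> \<kappa> p (\<lambda>t. if t \<le> a then 0 else f t)"
    "Lpw_norm 0 \<tau> \<kappa> p (\<lambda>t. if t \<le> a then 0 else f t) = Lpw_norm a \<tau> \<kappa> p f"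
proof -
  have eq: "(if t \<in> {a<..<\<tau>} then f t else 0) = (if t \<le> a then 0 else f t)" if "t \<in> {0<..<\<tau>}" for t
    using that by auto
  show "Lpw 0 \<tau> \<kappa> p (\<lambda>t. if t \<le> a then 0 else f t)"
    using Lpw_zero_extension[OF assms(1,2), of 0 \<tau>]
      Lpw_cong(1)[where a=0 and b=\<tau> and f="\<lambda>t. if t \<in> {a<..<\<tau>} then f t else 0" and g="\<lambda>t. if t \<le> a then 0 else f t", OF eq]
    by blast
  show "Lpw_norm 0 \<tau> \<kappa> p (\<lambda>t. if t \<le> a then 0 else f t) = Lpw_norm a \<tau> \<kappa> p f"
    using Lpw_norm_zero_extension[OF assms(2) assms(3), of \<tau> \<tau> \<kappa> f]
      Lpw_cong(2)[where a=0 and b=\<tau> and f="\<lambda>t. if t \<in> {a<..<\<tau>} then f t else 0" and g="\<lambda>t. if t \<le> a then 0 else f t", OF eq]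
    by simp
qed

lemma Lpw_AE_borel_norm:
  assumes "Lpw a b \<kappa> p f"
  obtains r where "r \<in> borel_measurable lborel" "\<And>t. 0 \<le> r t"
    "AE t in lborel. t \<in> {a<..<b} \<longrightarrow> norm (f t) = r t"
    "(\<integral>\<^sup>+ t \<in> {a<..<b}. ennreal (\<bar>t\<bar> powr \<kappa> * r t powr p) \<partial>lborel)
       = (\<integral>\<^sup>+ t \<in> {a<..<b}. ennreal (\<bar>t\<bar> powr \<kappa> * norm (f t) powr p) \<partial>lborel)"
proof -
  obtain r0 where r0: "r0 \<in> borel_measurable lborel" "AE t in lborel. t \<in> {a<..<b} \<longrightarrow> norm (f t) = r0 t"
    using strongly_measurable_on_AE_borel[of "{a<..<b}" f norm] assms unfolding Lpw_def by (auto intro: continuous_on_norm_id)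
  define r where "r t = \<bar>r0 t\<bar>" for t
  have m: "r \<in> borel_measurable lborel" unfolding r_def using r0(1) by measurable
  have ae: "AE t in lborel. t \<in> {a<..<b} \<longrightarrow> norm (f t) = r t"
    using r0(2) by eventually_elim (auto simp: r_def dest: sym)
  have "(\<integral>\<^sup>+ t \<in> {a<..<b}. ennreal (\<bar>t\<bar> powr \<kappa> * r t powr p) \<partial>lborel)
       = (\<integral>\<^sup>+ t \<in> {a<..<b}. ennreal (\<bar>t\<bar> powr \<kappa> * norm (f t) powr p) \<partial>lborel)"
    by (rule nn_integral_cong_AE) (use ae in \<open>eventually_elim, auto simp: indicator_def\<close>)
  then show ?thesis using that m ae by (auto simp: r_def)
qed

lemma powr_le_2_powr_add:
  fixes x y z p :: real
  assumes "0 \<le> x" "x \<le> y + z" "0 \<le> y" "0 \<le> z" "0 < p"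
  shows "x powr p \<le> 2 powr p * (y powr p + z powr p)"
proof -
  have "x \<le> 2 * max y z" using assms by linarith
  then have "x powr p \<le> (2 * max y z) powr p" using assms by (intro powr_mono2) auto
  also have "\<dots> = 2 powr p * max y z powr p" using assms by (simp add: powr_mult)
  also have "\<dots> \<le> 2 powr p * (y powr p + z powr p)"
    using assms by (intro mult_left_mono) (auto simp: max_def)
  finally show ?thesis .
qed

lemma Lpw_diff:
  fixes f g :: "real \<Rightarrow> 'a::real_normed_vector"
  assumes "Lpw a b \<kappa> p f" "Lpw a b \<kappa> p g" "0 < p"
  shows "Lpw a b \<kappa> p (\<lambda>t. f t - g t)"
proof -
  obtain r where r: "r \<in> borel_measurable lborel" "\<And>t. 0 \<le> r t"
    "AE t in lborel. t \<in> {a<..<b} \<longrightarrow> norm (f t) = r t"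
    "(\<integral>\<^sup>+ t \<in> {a<..<b}. ennreal (\<bar>t\<bar> powr \<kappa> * r t powr p) \<partial>lborel)
       = (\<integral>\<^sup>+ t \<in> {a<..<b}. ennreal (\<bar>t\<bar> powr \<kappa> * norm (f t) powr p) \<partial>lborel)"
    using Lpw_AE_borel_norm[OF assms(1)] by blast
  obtain r' where r': "r' \<in> borel_measurable lborel" "\<And>t. 0 \<le> r' t"
    "AE t in lborel. t \<in> {a<..<b} \<longrightarrow> norm (g t) = r' t"
    "(\<integral>\<^sup>+ t \<in> {a<..<b}. ennreal (\<bar>t\<bar> powr \<kappa> * r' t powr p) \<partial>lborel)
       = (\<integral>\<^sup>+ t \<in> {a<..<b}. ennreal (\<bar>t\<bar> powr \<kappa> * norm (g t) powr p) \<partial>lborel)"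
    using Lpw_AE_borel_norm[OF assms(2)] by blast
  let ?A = "\<lambda>t. ennreal (\<bar>t\<bar> powr \<kappa> * r t powr p) * indicator {a<..<b} t"
  let ?B = "\<lambda>t. ennreal (\<bar>t\<bar> powr \<kappa> * r' t powr p) * indicator {a<..<b} t"
  have mA: "?A \<in> borel_measurable lborel" using r(1) by measurable
  have mB: "?B \<in> borel_measurable lborel" using r'(1) by measurable
  have "(\<integral>\<^sup>+ t \<in> {a<..<b}. ennreal (\<bar>t\<bar> powr \<kappa> * norm (f t - g t) powr p) \<partial>lborel)
      \<le> (\<integral>\<^sup>+ t. ennreal (2 powr p) * (?A t + ?B t) \<partial>lborel)"
  proof (rule nn_integral_mono_AE)
    show "AE t in lborel. ennreal (\<bar>t\<bar> powr \<kappa> * norm (f t - g t) powr p) * indicator {a<..<b} t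
        \<le> ennreal (2 powr p) * (?A t + ?B t)"
      using r(3) r'(3)
    proof eventually_elim
      case (elim t)
      show ?case
      proof (cases "t \<in> {a<..<b}")
        case True
        have "norm (f t - g t) powr p \<le> 2 powr p * (r t powr p + r' t powr p)"
          using elim True r(2)[of t] r'(2)[of t] assms(3) norm_triangle_ineq4[of "f t" "g t"]
          by (intro powr_le_2_powr_add) auto
        then have "\<bar>t\<bar> powr \<kappa> * norm (f t - g t) powr p
            \<le> 2 powr p * (\<bar>t\<bar> powr \<kappa> * r t powr p + \<bar>t\<bar> powr \<kappa> * r' t powr p)"
          by (metis (no_types, opaque_lifting) distrib_left mult.left_commute mult_left_mono powr_ge_zero)
        then show ?thesis using True
          by (simp add: ennreal_mult'[symmetric] ennreal_plus[symmetric] del: ennreal_plus)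
      qed simp
    qed
  qed
  also have "\<dots> = ennreal (2 powr p) * ((\<integral>\<^sup>+ t. ?A t \<partial>lborel) + (\<integral>\<^sup>+ t. ?B t \<partial>lborel))"
    using mA mB by (simp add: nn_integral_cmult nn_integral_add)
  also have "\<dots> < \<infinity>"
    using assms(1,2) r(4) r'(4) unfolding Lpw_def
    by (simp add: ennreal_mult_less_top)
  finally show ?thesis using assms strongly_measurable_on_diff unfolding Lpw_def by blast
qed

lemma Lpw_norm_le_0_AE_zero:
  assumes "Lpw a b \<kappa> p f" "0 \<le> a" "0 < p" "Lpw_norm a b \<kappa> p f \<le> 0"
  shows "AE t in lborel. t \<in> {a<..<b} \<longrightarrow> f t = 0"
proof -
  obtain r where r: "r \<in> borel_measurable lborel" "\<And>t. 0 \<le> r t"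
    "AE t in lborel. t \<in> {a<..<b} \<longrightarrow> norm (f t) = r t"
    "(\<integral>\<^sup>+ t \<in> {a<..<b}. ennreal (\<bar>t\<bar> powr \<kappa> * r t powr p) \<partial>lborel)
       = (\<integral>\<^sup>+ t \<in> {a<..<b}. ennreal (\<bar>t\<bar> powr \<kappa> * norm (f t) powr p) \<partial>lborel)"
    using Lpw_AE_borel_norm[OF assms(1)] by blast
  let ?I = "\<integral>\<^sup>+ t \<in> {a<..<b}. ennreal (\<bar>t\<bar> powr \<kappa> * norm (f t) powr p) \<partial>lborel"
  have "Lpw_norm a b \<kappa> p f = 0" using assms(4) Lpw_norm_nonneg[of a b \<kappa> p f] by linarith
  then have "enn2real ?I = 0" unfolding Lpw_norm_def by simp
  moreover have "?I < \<infinity>" using assms(1) unfolding Lpw_def by blast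
  ultimately have "?I = 0" unfolding enn2real_eq_0_iff by auto
  then have "(\<integral>\<^sup>+ t. ennreal (\<bar>t\<bar> powr \<kappa> * r t powr p) * indicator {a<..<b} t \<partial>lborel) = 0"
    using r(4) by simp
  then have "AE t in lborel. ennreal (\<bar>t\<bar> powr \<kappa> * r t powr p) * indicator {a<..<b} t = 0"
    by (subst (asm) nn_integral_0_iff_AE) (use r(1) in measurable)
  then show ?thesis using r(3)
  proof eventually_elim
    case (elim t)
    show ?case
    proof
      assume t: "t \<in> {a<..<b}"
      then have "t > 0" using assms(2) by simp
      then have "r t powr p = 0" using elim t by (auto simp: indicator_def)
      then show "f t = 0" using elim t by simp
    qed
  qed
qed

lemma le_1_plus_weighted_powr:
  fixes r x s :: real
  assumes r: "0 \<le> r" and p: "1 \<le> p" and k: "0 \<le> \<kappa>" and s: "0 < s" "s \<le> x"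
  shows "r \<le> 1 + s powr (-\<kappa>) * (\<bar>x\<bar> powr \<kappa> * r powr p)"
proof -
  have "r \<le> 1 + r powr p"
  proof (cases "r \<le> 1")
    case False
    then have "r powr 1 \<le> r powr p" using p by (intro powr_mono) auto
    then show ?thesis using False by simp
  qed (use powr_ge_zero[of r p] in linarith)
  moreover have "1 \<le> s powr (-\<kappa>) * \<bar>x\<bar> powr \<kappa>"
  proof -
    have "s powr (-\<kappa>) * \<bar>x\<bar> powr \<kappa> = \<bar>x\<bar> powr \<kappa> / s powr \<kappa>"
      by (simp add: powr_minus divide_inverse mult.commute)
    also have "\<dots> = (\<bar>x\<bar> / s) powr \<kappa>"
      using s by (simp add: powr_divide)
    finally have "s powr (-\<kappa>) * \<bar>x\<bar> powr \<kappa> = (\<bar>x\<bar> / s) powr \<kappa>" .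
    then show ?thesis using s k by (simp add: ge_one_powr_ge_zero)
  qed
  then have "r powr p \<le> s powr (-\<kappa>) * \<bar>x\<bar> powr \<kappa> * r powr p"
    using mult_right_mono[of 1 _ "r powr p"] by simp
  ultimately show ?thesis by (simp add: mult.assoc)
qed

lemma Lpw_locally_integrable_norm:
  assumes "Lpw a b \<kappa> p f" "1 \<le> p" "0 \<le> \<kappa>"
  obtains r where "r \<in> borel_measurable lborel" "\<And>t. 0 \<le> r t"
    "AE t in lborel. t \<in> {a<..<b} \<longrightarrow> norm (f t) = r t"
    "\<And>s t. 0 < s \<Longrightarrow> set_integrable lborel ({a<..<b} \<inter> {s..t}) r"
proof -
  obtain r where r: "r \<in> borel_measurable lborel" "\<And>t. 0 \<le> r t"
    "AE t in lborel. t \<in> {a<..<b} \<longrightarrow> norm (f t) = r t"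
    "(\<integral>\<^sup>+ t \<in> {a<..<b}. ennreal (\<bar>t\<bar> powr \<kappa> * r t powr p) \<partial>lborel)
       = (\<integral>\<^sup>+ t \<in> {a<..<b}. ennreal (\<bar>t\<bar> powr \<kappa> * norm (f t) powr p) \<partial>lborel)"
    using Lpw_AE_borel_norm[OF assms(1)] by blast
  have fin: "(\<integral>\<^sup>+ t \<in> {a<..<b}. ennreal (\<bar>t\<bar> powr \<kappa> * r t powr p) \<partial>lborel) < \<infinity>"
    using r(4) assms(1) unfolding Lpw_def by simp
  have "set_integrable lborel ({a<..<b} \<inter> {s..t}) r" if s: "0 < s" for s t
    unfolding set_integrable_def
  proof (rule integrableI_bounded)
    show "(\<lambda>x. indicator ({a<..<b} \<inter> {s..t}) x *\<^sub>R r x) \<in> borel_measurable lborel"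
      using r(1) by measurable
    let ?A = "\<lambda>x. ennreal (indicator {s..t} x)"
    let ?B = "\<lambda>x. ennreal (\<bar>x\<bar> powr \<kappa> * r x powr p) * indicator {a<..<b} x"
    have "(\<integral>\<^sup>+ x. ennreal (norm (indicator ({a<..<b} \<inter> {s..t}) x *\<^sub>R r x)) \<partial>lborel)
        \<le> (\<integral>\<^sup>+ x. ?A x + ennreal (s powr (-\<kappa>)) * ?B x \<partial>lborel)"
    proof (rule nn_integral_mono)
      fix x
      show "ennreal (norm (indicator ({a<..<b} \<inter> {s..t}) x *\<^sub>R r x))
          \<le> ?A x + ennreal (s powr (-\<kappa>)) * ?B x"
      proof (cases "x \<in> {a<..<b} \<inter> {s..t}")
        case True
        then have "ennreal (r x) \<le> ennreal (1 + s powr (-\<kappa>) * (\<bar>x\<bar> powr \<kappa> * r x powr p))"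
          using le_1_plus_weighted_powr[OF r(2) assms(2,3) s] by (intro ennreal_leI) auto
        then show ?thesis using True r(2)[of x] by (simp add: ennreal_plus ennreal_mult)
      qed simp
    qed
    also have "\<dots> = emeasure lborel {s..t} + ennreal (s powr (-\<kappa>)) * (\<integral>\<^sup>+ x. ?B x \<partial>lborel)"
      using r(1) by (simp add: nn_integral_add nn_integral_cmult ennreal_indicator)
    also have "\<dots> < \<infinity>"
      using fin by (cases "s \<le> t") (auto simp: ennreal_mult_less_top)
    finally show "(\<integral>\<^sup>+ x. ennreal (norm (indicator ({a<..<b} \<inter> {s..t}) x *\<^sub>R r x)) \<partial>lborel) < \<infinity>" .
  qed
  then show ?thesis using that r by blast
qed

section \<open>Test functions and uniqueness of weak derivatives\<close>

lemma test_funI: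
  assumes "smooth \<phi>" "a < c" "c \<le> d" "d < b" "\<And>t. t \<notin> {c..d} \<Longrightarrow> \<phi> t = 0"
  shows "test_fun a b \<phi>"
  using assms unfolding test_fun_def smooth_def by blast

lemma test_fun_smooth: "test_fun a b \<phi> \<Longrightarrow> smooth \<phi>"
  unfolding test_fun_def smooth_def by blast

lemma test_funE:
  assumes "test_fun a b \<phi>"
  obtains c d where "a < c" "c \<le> d" "d < b" "\<And>t. t \<notin> {c..d} \<Longrightarrow> \<phi> t = 0"
  using assms unfolding test_fun_def by blast

lemma test_fun_subinterval:
  assumes "test_fun a b \<phi>" "a0 \<le> a" "b \<le> b0"
  shows "test_fun a0 b0 \<phi>"
proof -
  obtain c d where "a < c" "c \<le> d" "d < b" "\<And>t. t \<notin> {c..d} \<Longrightarrow> \<phi> t = 0"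
    using test_funE[OF assms(1)] by metis
  then show ?thesis
    using assms test_fun_smooth[OF assms(1)] by (intro test_funI[of _ _ c d]) auto
qed

lemma deriv_eq_0_outside:
  fixes \<phi> :: "real \<Rightarrow> real"
  assumes "\<And>t. t \<notin> {c..d} \<Longrightarrow> \<phi> t = 0" "x \<notin> {c..d}"
  shows "deriv \<phi> x = 0"
proof -
  have "((\<lambda>t. 0) has_real_derivative 0) (at x)" by simp
  then have "(\<phi> has_real_derivative 0) (at x)"
  proof (rule has_field_derivative_transform_within_open[of _ _ _ "{..<c} \<union> {d<..}"])
    fix t assume "t \<in> {..<c} \<union> {d<..}"
    then have "t \<notin> {c..d}" by auto
    then show "0 = \<phi> t" using assms(1) by simp
  qed (use assms(2) in auto)
  then show ?thesis by (rule DERIV_imp_deriv)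
qed

lemma continuous_on_interval_bounded:
  fixes k :: "real \<Rightarrow> 'a::real_normed_vector"
  assumes "continuous_on {c..d} k"
  obtains B where "0 \<le> B" "\<And>t. t \<in> {c..d} \<Longrightarrow> norm (k t) \<le> B"
proof -
  have "bounded (k ` {c..d})"
    by (intro compact_imp_bounded compact_continuous_image assms) auto
  then obtain B where "\<forall>y \<in> k ` {c..d}. norm y \<le> B" unfolding bounded_iff by blast
  then show ?thesis using that[of "max 0 B"] by force
qed

lemma smooth_bounded_on_interval:
  assumes "smooth \<phi>"
  obtains M where "\<And>x. x \<in> {c..d} \<Longrightarrow> \<bar>\<phi> x\<bar> \<le> M"
proof -
  obtain B where "\<And>x. x \<in> {c..d} \<Longrightarrow> norm (\<phi> x) \<le> B"
    using continuous_on_interval_bounded[OF smooth_continuous_on[OF assms]] by blast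
  then have "\<And>x. x \<in> {c..d} \<Longrightarrow> \<bar>\<phi> x\<bar> \<le> B" by simp
  then show ?thesis by (rule that)
qed

lemma set_integrable_smooth_mult:
  fixes f :: "real \<Rightarrow> real"
  assumes "smooth \<phi>" "\<And>t. t \<notin> {c..d} \<Longrightarrow> \<phi> t = 0" "{c..d} \<subseteq> S" "S \<in> sets lborel"
    and fm: "f \<in> borel_measurable lborel" and fi: "set_integrable lborel {c..d} f"
  shows "set_integrable lborel S (\<lambda>x. \<phi> x * f x)"
proof -
  obtain M where M: "\<And>x. x \<in> {c..d} \<Longrightarrow> \<bar>\<phi> x\<bar> \<le> M"
    using smooth_bounded_on_interval[OF assms(1)] by blast
  have im: "integrable lborel (\<lambda>x. M * (indicator {c..d} x * f x))"
    using fi unfolding set_integrable_def by simp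
  note fm[measurable] smooth_borel_measurable[OF assms(1), measurable]
  show ?thesis unfolding set_integrable_def
  proof (rule Bochner_Integration.integrable_bound[OF im])
    show "(\<lambda>x. indicat_real S x *\<^sub>R (\<phi> x * f x)) \<in> borel_measurable lborel"
      using assms(4) by measurable
    show "AE x in lborel. norm (indicat_real S x *\<^sub>R (\<phi> x * f x)) \<le> norm (M * (indicat_real {c..d} x * f x))"
    proof (intro AE_I2)
      fix x
      show "norm (indicat_real S x *\<^sub>R (\<phi> x * f x)) \<le> norm (M * (indicat_real {c..d} x * f x))"
      proof (cases "x \<in> {c..d}")
        case True
        then have "\<bar>\<phi> x\<bar> * \<bar>f x\<bar> \<le> \<bar>M\<bar> * \<bar>f x\<bar>" using M[of x] by (intro mult_right_mono) auto
        then show ?thesis using True assms(3) by (auto simp: abs_mult)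
      qed (simp add: assms(2))
    qed
  qed
qed

lemma prod_le_factor:
  fixes f :: "'a \<Rightarrow> real"
  assumes "finite I" "k \<in> I" "\<And>j. j \<in> I \<Longrightarrow> 0 \<le> f j \<and> f j \<le> 1"
  shows "(\<Prod>j\<in>I. f j) \<le> f k"
proof -
  have "(\<Prod>j\<in>I. f j) = f k * (\<Prod>j\<in>I - {k}. f j)"
    using assms by (simp add: prod.remove)
  also have "\<dots> \<le> f k * 1"
    using assms by (intro mult_left_mono prod_le_1) auto
  finally show ?thesis by simp
qed

definition interval_bump :: "nat \<Rightarrow> real \<Rightarrow> real \<Rightarrow> real \<Rightarrow> real" where
  "interval_bump n \<alpha> \<beta> x = flat_step (real n * (x - \<alpha>)) * flat_step (real n * (\<beta> - x))"

lemma interval_bump_nonneg: "0 \<le> interval_bump n \<alpha> \<beta> x"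
  unfolding interval_bump_def using flat_step_nonneg by simp

lemma interval_bump_le_1: "interval_bump n \<alpha> \<beta> x \<le> 1"
  unfolding interval_bump_def using flat_step_nonneg flat_step_le_1 by (intro mult_le_one) auto

lemma interval_bump_eq_0: "x \<le> \<alpha> \<or> \<beta> \<le> x \<Longrightarrow> interval_bump n \<alpha> \<beta> x = 0"
  unfolding interval_bump_def by (auto intro!: flat_step_eq_0 mult_nonneg_nonpos)

lemma interval_bump_tendsto_1:
  assumes "\<alpha> < x" "x < \<beta>"
  shows "(\<lambda>n. interval_bump n \<alpha> \<beta> x) \<longlonglongrightarrow> 1"
proof -
  have "(\<lambda>n. flat_step (real n * (x - \<alpha>) - 0) * flat_step (real n * (\<beta> - x) - 0)) \<longlonglongrightarrow> 1 * 1"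
    using assms by (intro tendsto_mult flat_step_scaled_tendsto_1) auto
  then show ?thesis by (simp add: interval_bump_def)
qed

lemma smooth_interval_bump: "smooth (interval_bump n \<alpha> \<beta>)"
  unfolding interval_bump_def
  by (intro smooth_diff smooth_const smooth_mult smooth_id smooth_compose[OF smooth_flat_step])

lemma open_real_eq_UN_intervals:
  fixes U :: "real set"
  assumes "open U" "U \<noteq> {}"
  obtains \<alpha> \<beta> :: "nat \<Rightarrow> real" where "U = (\<Union>k. {\<alpha> k<..<\<beta> k})"
proof -
  obtain \<D> where D: "countable \<D>" "\<D> \<subseteq> Pow U" "\<And>X. X \<in> \<D> \<Longrightarrow> \<exists>a b. X = box a b" "\<Union>\<D> = U"
    using open_countable_Union_open_box[OF assms(1)] by blast
  then have Dne: "\<D> \<noteq> {}" using assms(2) by auto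
  define B where "B = from_nat_into \<D>"
  have B: "B k \<in> \<D>" for k unfolding B_def using from_nat_into[OF Dne] by blast
  have "\<forall>k. \<exists>\<alpha> \<beta>. B k = box \<alpha> \<beta>" using D(3) B by blast
  then obtain \<alpha> \<beta> where "\<And>k. B k = {\<alpha> k<..<\<beta> k}" by (metis box_real(1))
  moreover have "U = (\<Union>k. B k)" unfolding B_def using D(1,4) Dne by simp
  ultimately have "U = (\<Union>k. {\<alpha> k<..<\<beta> k})" by simp
  then show ?thesis by (rule that)
qed

lemma test_funs_tendsto_indicator_open:
  assumes U: "open U" "U \<subseteq> {s..t}" "U \<noteq> {}" and ab: "a < s" "t < b"
  obtains \<psi> where "\<And>n. test_fun a b (\<psi> n)" "\<And>n x. 0 \<le> \<psi> n x \<and> \<psi> n x \<le> 1"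
    "\<And>n x. x \<notin> U \<Longrightarrow> \<psi> n x = 0" "\<And>x. (\<lambda>n. \<psi> n x) \<longlonglongrightarrow> indicator U x"
proof -
  obtain \<alpha> \<beta> :: "nat \<Rightarrow> real" where UB: "U = (\<Union>k. {\<alpha> k<..<\<beta> k})"
    using open_real_eq_UN_intervals[OF U(1,3)] by blast
  define fac where "fac n k x = 1 - interval_bump n (\<alpha> k) (\<beta> k) x" for n k x
  define \<psi> where "\<psi> n x = 1 - (\<Prod>k<n. fac n k x)" for n x
  have fac01: "0 \<le> fac n k x \<and> fac n k x \<le> 1" for n k x
    unfolding fac_def using interval_bump_nonneg interval_bump_le_1 by auto
  have "0 \<le> (\<Prod>k<n. fac n k x) \<and> (\<Prod>k<n. fac n k x) \<le> 1" for n x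
    using fac01 by (auto intro!: prod_nonneg prod_le_1)
  then have psi01: "0 \<le> \<psi> n x \<and> \<psi> n x \<le> 1" for n x
    unfolding \<psi>_def by auto
  have psi0: "\<psi> n x = 0" if "x \<notin> U" for n x
  proof -
    have "x \<notin> {\<alpha> k<..<\<beta> k}" for k using that UB by blast
    then have "x \<le> \<alpha> k \<or> \<beta> k \<le> x" for k by (meson greaterThanLessThan_iff not_le)
    then have "fac n k x = 1" for k unfolding fac_def using interval_bump_eq_0 by simp
    then show ?thesis unfolding \<psi>_def by simp
  qed
  have smooth_psi: "smooth (\<psi> n)" for n
    unfolding \<psi>_def fac_def
    by (intro smooth_diff smooth_const smooth_prod smooth_interval_bump)
  have "s \<le> t" using U by auto
  have test: "test_fun a b (\<psi> n)" for n
  proof (rule test_funI[OF smooth_psi])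
    fix x :: real assume "x \<notin> {s..t}"
    then show "\<psi> n x = 0" using U(2) by (intro psi0) auto
  qed (use ab \<open>s \<le> t\<close> in auto)
  have lim: "(\<lambda>n. \<psi> n x) \<longlonglongrightarrow> indicator U x" for x
  proof (cases "x \<in> U")
    case True
    then obtain k where "x \<in> {\<alpha> k<..<\<beta> k}" using UB by blast
    then have k: "\<alpha> k < x" "x < \<beta> k" by auto
    have "(\<lambda>n. \<psi> n x) \<longlonglongrightarrow> 1"
    proof (rule tendsto_sandwich[OF _ _ interval_bump_tendsto_1[OF k] tendsto_const])
      show "\<forall>\<^sub>F n in sequentially. interval_bump n (\<alpha> k) (\<beta> k) x \<le> \<psi> n x"
        unfolding eventually_sequentially
      proof (intro exI[of _ "Suc k"] allI impI)
        fix n assume "Suc k \<le> n"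
        then have "(\<Prod>j<n. fac n j x) \<le> fac n k x"
          using fac01 by (intro prod_le_factor) auto
        then show "interval_bump n (\<alpha> k) (\<beta> k) x \<le> \<psi> n x" unfolding \<psi>_def fac_def by simp
      qed
      show "\<forall>\<^sub>F n in sequentially. \<psi> n x \<le> 1" using psi01 by simp
    qed
    then show ?thesis using True by simp
  qed (simp add: psi0)
  show ?thesis by (rule that[OF test psi01 psi0 lim])
qed

lemma set_integral_open_nonpos:
  fixes q :: "real \<Rightarrow> real"
  assumes qm: "q \<in> borel_measurable lborel"
    and qi: "set_integrable lborel {s..t} q"
    and ab: "a < s" "t < b"
    and H: "\<And>\<phi>. test_fun a b \<phi> \<Longrightarrow> (\<forall>x. 0 \<le> \<phi> x) \<Longrightarrow>
              integral\<^sup>L lborel (\<lambda>x. indicator {a<..<b} x * (\<phi> x * q x)) \<le> 0"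
    and U: "open U" "U \<subseteq> {s..t}"
  shows "integral\<^sup>L lborel (\<lambda>x. indicator U x * q x) \<le> 0"
proof (cases "U = {}")
  case False
  obtain \<psi> where test: "\<And>n. test_fun a b (\<psi> n)" and psi01: "\<And>n x. 0 \<le> \<psi> n x \<and> \<psi> n x \<le> 1"
    and psi0: "\<And>n x. x \<notin> U \<Longrightarrow> \<psi> n x = 0" and lim: "\<And>x. (\<lambda>n. \<psi> n x) \<longlonglongrightarrow> indicator U x"
    using test_funs_tendsto_indicator_open[OF U False ab] by blast
  note qm[measurable]
  have Ub[measurable]: "U \<in> sets borel" using U(1) by (simp add: borel_open)
  have Uab: "U \<subseteq> {a<..<b}" using U ab by auto
  have w: "integrable lborel (\<lambda>x. indicator {s..t} x * \<bar>q x\<bar>)"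
    using integrable_abs[OF qi[unfolded set_integrable_def]] by (simp add: abs_mult)
  have conv: "(\<lambda>n. integral\<^sup>L lborel (\<lambda>x. indicator {a<..<b} x * (\<psi> n x * q x)))
      \<longlonglongrightarrow> integral\<^sup>L lborel (\<lambda>x. indicator U x * q x)"
  proof (rule integral_dominated_convergence[where w="\<lambda>x. indicator {s..t} x * \<bar>q x\<bar>"])
    show "(\<lambda>x. indicator U x * q x) \<in> borel_measurable lborel"
      by measurable
    show "(\<lambda>x. indicator {a<..<b} x * (\<psi> n x * q x)) \<in> borel_measurable lborel" for n
      using qm smooth_borel_measurable[OF test_fun_smooth[OF test[of n]]] by measurable
    show "integrable lborel (\<lambda>x. indicator {s..t} x * \<bar>q x\<bar>)" by (rule w)
    show "AE x in lborel. (\<lambda>n. indicator {a<..<b} x * (\<psi> n x * q x)) \<longlonglongrightarrow> indicator U x * q x"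
    proof (intro AE_I2)
      fix x
      have "(\<lambda>n. indicator {a<..<b} x * (\<psi> n x * q x)) \<longlonglongrightarrow> indicator {a<..<b} x * (indicator U x * q x)"
        by (intro tendsto_mult tendsto_const lim)
      moreover have "indicator {a<..<b} x * (indicator U x * q x) = indicator U x * q x"
        using Uab by (auto simp: indicator_def)
      ultimately show "(\<lambda>n. indicator {a<..<b} x * (\<psi> n x * q x)) \<longlonglongrightarrow> indicator U x * q x" by simp
    qed
    show "AE x in lborel. norm (indicator {a<..<b} x * (\<psi> n x * q x)) \<le> indicator {s..t} x * \<bar>q x\<bar>" for n
    proof (intro AE_I2)
      fix x
      show "norm (indicator {a<..<b} x * (\<psi> n x * q x)) \<le> indicator {s..t} x * \<bar>q x\<bar>"
      proof (cases "x \<in> U")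
        case True
        then show ?thesis using U(2) Uab psi01[of n x]
          by (auto simp: indicator_def abs_mult intro: mult_left_le_one_le)
      qed (simp add: psi0)
    qed
  qed
  have "integral\<^sup>L lborel (\<lambda>x. indicator {a<..<b} x * (\<psi> n x * q x)) \<le> 0" for n
    using H[OF test] psi01 by blast
  then show ?thesis using conv by (intro LIMSEQ_le_const2) auto
qed simp

lemma outer_regular_lborel_decseq:
  fixes E :: "real set"
  assumes Eb: "E \<in> sets borel" and EU: "E \<subseteq> U" and U: "open U"
  obtains V where "\<And>k. open (V k)" "\<And>k. E \<subseteq> V k" "\<And>k. V k \<subseteq> U" "decseq V"
    "emeasure lborel ((\<Inter>k. V k) - E) = 0"
proof -
  have "\<exists>T. open T \<and> E \<subseteq> T \<and> emeasure lborel (T - E) < ennreal (1 / Suc k)" for k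
    using outer_regular_lborel[OF Eb, of "1 / Suc k"] by auto
  then obtain T where T: "\<And>k. open (T k)" "\<And>k. E \<subseteq> T k"
    "\<And>k. emeasure lborel (T k - E) < ennreal (1 / Suc k)"
    by metis
  define V where "V k = U \<inter> (\<Inter>j\<le>k. T j)" for k
  have Vo: "open (V k)" for k unfolding V_def using T(1) U by (intro open_Int open_INT) auto
  have EV: "E \<subseteq> V k" and VU: "V k \<subseteq> U" for k unfolding V_def using T(2) EU by auto
  have Vdec: "decseq V" unfolding V_def decseq_def by auto
  have "emeasure lborel ((\<Inter>k. V k) - E) \<le> 0"
  proof (rule ennreal_le_epsilon)
    fix e :: real assume "0 < e"
    then obtain k where k: "1 / Suc k < e"
      by (metis inverse_eq_divide of_nat_Suc reals_Archimedean)
    have "T k \<in> sets borel" using T(1) by (simp add: borel_open)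
    then have "emeasure lborel ((\<Inter>k. V k) - E) \<le> emeasure lborel (T k - E)"
      using Eb by (intro emeasure_mono) (auto simp: V_def)
    also have "\<dots> \<le> ennreal (1 / Suc k)" using T(3)[of k] by simp
    also have "\<dots> \<le> ennreal e" using k by (intro ennreal_leI) simp
    finally show "emeasure lborel ((\<Inter>k. V k) - E) \<le> 0 + ennreal e" by simp
  qed
  then show ?thesis using that[OF Vo EV VU Vdec] by simp
qed

lemma set_integral_nonpos_of_open:
  fixes q :: "real \<Rightarrow> real"
  assumes qm[measurable]: "q \<in> borel_measurable lborel"
    and qi: "set_integrable lborel {s..t} q"
    and H: "\<And>V. open V \<Longrightarrow> V \<subseteq> {s<..<t} \<Longrightarrow> integral\<^sup>L lborel (\<lambda>x. indicator V x * q x) \<le> 0"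
    and Eb[measurable]: "E \<in> sets borel" and Est: "E \<subseteq> {s<..<t}"
  shows "integral\<^sup>L lborel (\<lambda>x. indicator E x * q x) \<le> 0"
proof -
  obtain V where Vo: "\<And>k. open (V k)" and EV: "\<And>k. E \<subseteq> V k" and Vst: "\<And>k. V k \<subseteq> {s<..<t}"
    and Vdec: "decseq V" and null: "emeasure lborel ((\<Inter>k. V k) - E) = 0"
    using outer_regular_lborel_decseq[OF Eb Est open_greaterThanLessThan] by blast
  have Vb[measurable]: "V k \<in> sets borel" for k using Vo by (simp add: borel_open)
  have "(\<lambda>k. integral\<^sup>L lborel (\<lambda>x. indicator (V k) x * q x))
      \<longlonglongrightarrow> integral\<^sup>L lborel (\<lambda>x. indicator (\<Inter>k. V k) x * q x)"
  proof (rule integral_dominated_convergence[where w="\<lambda>x. indicator {s..t} x * \<bar>q x\<bar>"])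
    show "integrable lborel (\<lambda>x. indicator {s..t} x * \<bar>q x\<bar>)"
      using integrable_abs[OF qi[unfolded set_integrable_def]] by (simp add: abs_mult)
    show "AE x in lborel. (\<lambda>k. indicator (V k) x * q x) \<longlonglongrightarrow> indicator (\<Inter>k. V k) x * q x"
      by (intro AE_I2 tendsto_mult_right LIMSEQ_indicator_decseq Vdec)
    show "AE x in lborel. norm (indicator (V k) x * q x) \<le> indicator {s..t} x * \<bar>q x\<bar>" for k
      using Vst[of k] by (intro AE_I2) (auto simp: indicator_def)
  qed measurable
  then have "integral\<^sup>L lborel (\<lambda>x. indicator (\<Inter>k. V k) x * q x) \<le> 0"
    using H[OF Vo Vst] by (intro LIMSEQ_le_const2) auto
  moreover have "AE x in lborel. x \<notin> (\<Inter>k. V k) - E"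
    using null by (intro AE_not_in) (auto intro: null_setsI)
  then have "AE x in lborel. indicator (\<Inter>k. V k) x * q x = indicator E x * q x"
    by eventually_elim (use EV in \<open>auto simp: indicator_def\<close>)
  then have "integral\<^sup>L lborel (\<lambda>x. indicator (\<Inter>k. V k) x * q x)
      = integral\<^sup>L lborel (\<lambda>x. indicator E x * q x)"
    by (intro integral_cong_AE) measurable
  ultimately show ?thesis by simp
qed

lemma AE_nonpos_on_interval_if_test_integrals_nonpos:
  fixes q :: "real \<Rightarrow> real"
  assumes qm: "q \<in> borel_measurable lborel"
    and qi: "set_integrable lborel {s..t} q"
    and ab: "a < s" "t < b"
    and H: "\<And>\<phi>. test_fun a b \<phi> \<Longrightarrow> (\<forall>x. 0 \<le> \<phi> x) \<Longrightarrow>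
              integral\<^sup>L lborel (\<lambda>x. indicator {a<..<b} x * (\<phi> x * q x)) \<le> 0"
  shows "AE x in lborel. x \<in> {s<..<t} \<longrightarrow> q x \<le> 0"
proof -
  note qm[measurable]
  define E where "E = {x. x \<in> {s<..<t} \<and> 0 < q x}"
  have Eb[measurable]: "E \<in> sets borel" unfolding E_def by measurable
  have le0: "integral\<^sup>L lborel (\<lambda>x. indicator E x * q x) \<le> 0"
    by (rule set_integral_nonpos_of_open[OF qm qi _ Eb])
       (auto simp: E_def intro!: set_integral_open_nonpos[OF qm qi ab H])
  have intE: "integrable lborel (\<lambda>x. indicator E x * q x)"
  proof -
    have "set_integrable lborel E q" by (rule set_integrable_subset[OF qi]) (auto simp: E_def)
    then show ?thesis unfolding set_integrable_def by simp
  qed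
  have nonneg: "AE x in lborel. 0 \<le> indicator E x * q x"
    by (intro AE_I2) (auto simp: indicator_def E_def)
  have "integral\<^sup>L lborel (\<lambda>x. indicator E x * q x) = 0"
    using le0 integral_nonneg_AE[OF nonneg] by simp
  then have "AE x in lborel. indicator E x * q x = 0"
    using integral_nonneg_eq_0_iff_AE[OF intE nonneg] by simp
  then show ?thesis
    by eventually_elim (auto simp: indicator_def E_def split: if_splits)
qed

lemma AE_nonpos_if_test_integrals_nonpos:
  fixes q :: "real \<Rightarrow> real"
  assumes qm: "q \<in> borel_measurable lborel"
    and qi: "\<And>s t. a < s \<Longrightarrow> t < b \<Longrightarrow> set_integrable lborel {s..t} q"
    and H: "\<And>\<phi>. test_fun a b \<phi> \<Longrightarrow> (\<forall>x. 0 \<le> \<phi> x) \<Longrightarrow>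
              integral\<^sup>L lborel (\<lambda>x. indicator {a<..<b} x * (\<phi> x * q x)) \<le> 0"
  shows "AE x in lborel. x \<in> {a<..<b} \<longrightarrow> q x \<le> 0"
proof (cases "a < b")
  case False
  then show ?thesis by simp
next
  case True
  define s where "s m = a + (b - a) / (real m + 3)" for m :: nat
  define t where "t m = b - (b - a) / (real m + 3)" for m :: nat
  have st: "a < s m" "t m < b" for m using True by (auto simp: s_def t_def)
  have "\<forall>m. AE x in lborel. x \<in> {s m<..<t m} \<longrightarrow> q x \<le> 0"
    using AE_nonpos_on_interval_if_test_integrals_nonpos[OF qm qi[OF st] st H] by blast
  then have "AE x in lborel. \<forall>m. x \<in> {s m<..<t m} \<longrightarrow> q x \<le> 0"
    using AE_all_countable[of "\<lambda>m x. x \<in> {s m<..<t m} \<longrightarrow> q x \<le> 0" lborel] by blast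
  then show ?thesis
  proof eventually_elim
    case (elim x)
    show ?case
    proof
      assume x: "x \<in> {a<..<b}"
      define \<delta> where "\<delta> = min (x - a) (b - x)"
      have "\<delta> > 0" using x by (auto simp: \<delta>_def)
      then obtain m :: nat where "(b - a) / \<delta> < real m" using reals_Archimedean2 by blast
      then have "(b - a) / (real m + 3) < \<delta>"
        using \<open>\<delta> > 0\<close> True by (simp add: field_simps)
      then have "x \<in> {s m<..<t m}" by (auto simp: s_def t_def \<delta>_def)
      then show "q x \<le> 0" using elim by blast
    qed
  qed
qed


text \<open>Testing against \<open>\<phi> \<ge> 0\<close>: \<open>(\<integral>\<phi>) y = \<integral>\<phi> (y - d)\<close>, hence
  \<open>(\<integral>\<phi>) \<parallel>y\<parallel> \<le> \<integral>\<phi> \<parallel>y - d\<parallel>\<close>.\<close>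

lemma test_integral_norm_diff_nonpos:
  fixes d :: "real \<Rightarrow> 'a::banach" and R :: "real \<Rightarrow> real"
  assumes \<phi>: "test_fun a b \<phi>" "\<forall>x. 0 \<le> \<phi> x"
    and d: "((\<lambda>t. \<phi> t *\<^sub>R d t) has_integral 0) {a<..<b}"
    and Rm[measurable]: "R \<in> borel_measurable lborel"
    and R: "AE t in lborel. t \<in> {a<..<b} \<longrightarrow> norm y - norm (y - d t) = R t"
    and Ri: "\<And>s t. a < s \<Longrightarrow> t < b \<Longrightarrow> set_integrable lborel {s..t} R"
  shows "integral\<^sup>L lborel (\<lambda>x. indicator {a<..<b} x * (\<phi> x * R x)) \<le> 0"
proof -
  obtain c e where ce: "a < c" "c \<le> e" "e < b" "\<And>t. t \<notin> {c..e} \<Longrightarrow> \<phi> t = 0"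
    using test_funE[OF \<phi>(1)] by blast
  have sm: "smooth \<phi>" using \<phi>(1) by (rule test_fun_smooth)
  have sub: "{c..e} \<subseteq> {a<..<b}" using ce by auto
  define I\<phi> where "I\<phi> = integral {c..e} \<phi>"
  have phi_int: "(\<phi> has_integral I\<phi>) {a<..<b}"
  proof -
    have "(\<phi> has_integral I\<phi>) {c..e}"
      unfolding I\<phi>_def using integrable_continuous_interval[OF smooth_continuous_on[OF sm]] by blast
    moreover have "(\<phi> has_integral I\<phi>) {c..e} \<longleftrightarrow> (\<phi> has_integral I\<phi>) {a<..<b}"
      by (rule has_integral_supp_eq[OF negligible_empty]) (use sub ce(4) in auto)
    ultimately show ?thesis by blast
  qed
  have h: "((\<lambda>t. \<phi> t *\<^sub>R (y - d t)) has_integral I\<phi> *\<^sub>R y) {a<..<b}"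
    using has_integral_diff[OF has_integral_scaleR_left[OF phi_int] d]
    by (simp add: scaleR_diff_right)
  have siR: "set_integrable lborel {a<..<b} (\<lambda>x. \<phi> x * R x)"
    by (rule set_integrable_smooth_mult[OF sm ce(4) sub _ Rm Ri[OF ce(1) ce(3)]]) measurable
  have hkR: "(\<lambda>x. \<phi> x * R x) integrable_on {a<..<b}"
    "(LINT x:{a<..<b}|lborel. \<phi> x * R x) = integral {a<..<b} (\<lambda>x. \<phi> x * R x)"
    using set_borel_integral_eq_integral[OF siR] by auto
  have ae: "AE x in lborel. x \<in> {a<..<b} \<longrightarrow> \<phi> x * (norm y - R x) = \<phi> x * norm (y - d x)"
    using R by eventually_elim auto
  have e_int: "(\<lambda>x. \<phi> x * norm y - \<phi> x * R x) integrable_on {a<..<b}"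
    using phi_int hkR(1) by (intro integrable_diff integrable_on_mult_left) auto
  have n_int: "(\<lambda>x. \<phi> x * norm (y - d x)) integrable_on {a<..<b}"
    using e_int integrable_on_AE_cong[OF ae] by (simp add: right_diff_distrib)
  have "integral {a<..<b} (\<lambda>x. \<phi> x * norm (y - d x))
      = integral {a<..<b} (\<lambda>x. \<phi> x * norm y - \<phi> x * R x)"
    using integral_AE_cong[OF ae] by (simp add: right_diff_distrib)
  also have "\<dots> = integral {a<..<b} (\<lambda>x. \<phi> x * norm y) - integral {a<..<b} (\<lambda>x. \<phi> x * R x)"
    by (rule integral_diff) (use phi_int hkR(1) in \<open>auto intro: integrable_on_mult_left\<close>)
  also have "integral {a<..<b} (\<lambda>x. \<phi> x * norm y) = norm y * I\<phi>"
    using integral_unique[OF phi_int] by (simp add: mult.commute)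
  finally have n_val: "integral {a<..<b} (\<lambda>x. \<phi> x * norm (y - d x))
      = norm y * I\<phi> - integral {a<..<b} (\<lambda>x. \<phi> x * R x)" .
  have "I\<phi> * norm y \<le> norm (I\<phi> *\<^sub>R y)" by (simp add: mult_right_mono)
  also have "\<dots> \<le> integral {a<..<b} (\<lambda>x. \<phi> x * norm (y - d x))"
  proof -
    have "norm (integral {a<..<b} (\<lambda>t. \<phi> t *\<^sub>R (y - d t)))
        \<le> integral {a<..<b} (\<lambda>x. \<phi> x * norm (y - d x))"
      by (rule integral_norm_bound_integral) (use h n_int \<phi>(2) in auto)
    then show ?thesis using h by (simp add: integral_unique)
  qed
  finally have "integral {a<..<b} (\<lambda>x. \<phi> x * R x) \<le> 0" using n_val by (simp add: mult.commute)
  then show ?thesis using hkR(2) by (simp add: set_lebesgue_integral_def)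
qed

lemma eq_0_if_norm_le_norm_diff_on_dense:
  fixes x :: "'a::real_normed_vector"
  assumes "x \<in> closure C" "\<And>y. y \<in> C \<Longrightarrow> norm y \<le> norm (y - x)"
  shows "x = 0"
proof -
  obtain ys where ys: "\<And>n. ys n \<in> C" "ys \<longlonglongrightarrow> x"
    using assms(1) unfolding closure_sequential by blast
  have "(\<lambda>n. norm (ys n)) \<longlonglongrightarrow> norm x" using ys(2) by (rule tendsto_norm)
  moreover have "(\<lambda>n. norm (ys n - x)) \<longlonglongrightarrow> norm (x - x)"
    using ys(2) by (intro tendsto_norm tendsto_diff tendsto_const)
  ultimately have "norm x \<le> norm (x - x)"
    using assms(2) ys(1) by (intro tendsto_le[OF trivial_limit_sequentially]) auto
  then show "x = 0" by simp
qed

text \<open>Du Bois-Reymond lemma for Banach-valued functions. With no functionals at hand, the scalar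
  version is applied to \<open>\<parallel>y\<parallel> - \<parallel>y - d\<parallel>\<close> for \<open>y\<close> in a countable set whose closure
  contains almost all values of \<open>d\<close>.\<close>

lemma AE_zero_if_test_integrals_zero:
  fixes d :: "real \<Rightarrow> 'a::banach" and r :: "real \<Rightarrow> real"
  assumes smd: "strongly_measurable_on {a<..<b} d"
    and rm[measurable]: "r \<in> borel_measurable lborel"
    and rd: "AE t in lborel. t \<in> {a<..<b} \<longrightarrow> norm (d t) \<le> r t"
    and ri: "\<And>s t. a < s \<Longrightarrow> t < b \<Longrightarrow> set_integrable lborel {s..t} r"
    and H: "\<And>\<phi>. test_fun a b \<phi> \<Longrightarrow> ((\<lambda>t. \<phi> t *\<^sub>R d t) has_integral 0) {a<..<b}"
  shows "AE t in lborel. t \<in> {a<..<b} \<longrightarrow> d t = 0"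
proof -
  obtain C where C: "countable C" "AE t in lborel. t \<in> {a<..<b} \<longrightarrow> d t \<in> closure C"
    using strongly_measurable_on_AE_separable[OF smd] by blast
  have "\<exists>R. R \<in> borel_measurable lborel \<and>
      (AE t in lborel. t \<in> {a<..<b} \<longrightarrow> norm y - norm (y - d t) = R t)" for y
  proof -
    have "continuous_on UNIV (\<lambda>z. norm y - norm (y - z))" by (intro continuous_intros)
    from strongly_measurable_on_AE_borel[OF smd this] show ?thesis by blast
  qed
  then obtain R where Rm[measurable]: "\<And>y. R y \<in> borel_measurable lborel"
    and R: "\<And>y. AE t in lborel. t \<in> {a<..<b} \<longrightarrow> norm y - norm (y - d t) = R y t"
    by metis
  have Ri: "set_integrable lborel {s..t} (R y)" if st: "a < s" "t < b" for y s t
    unfolding set_integrable_def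
  proof (rule Bochner_Integration.integrable_bound[OF ri[OF st, unfolded set_integrable_def]])
    show "AE x in lborel. norm (indicat_real {s..t} x *\<^sub>R R y x) \<le> norm (indicat_real {s..t} x *\<^sub>R r x)"
      using R[of y] rd
    proof eventually_elim
      case (elim x)
      show ?case
      proof (cases "x \<in> {s..t}")
        case True
        then have x: "x \<in> {a<..<b}" using st by auto
        have "\<bar>R y x\<bar> = \<bar>norm y - norm (y - d x)\<bar>" using elim x by simp
        also have "\<dots> \<le> norm (d x)" using norm_triangle_ineq3[of y "y - d x"] by simp
        finally show ?thesis using True x elim by simp
      qed simp
    qed
  qed measurable
  have R0: "AE t in lborel. t \<in> {a<..<b} \<longrightarrow> R y t \<le> 0" for y
    by (rule AE_nonpos_if_test_integrals_nonpos[OF Rm Ri test_integral_norm_diff_nonpos[OF _ _ H Rm R Ri]])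
  have "AE t in lborel. \<forall>y\<in>C. t \<in> {a<..<b} \<longrightarrow> norm y \<le> norm (y - d t)"
  proof (subst AE_ball_countable[OF C(1)], intro ballI)
    fix y
    show "AE t in lborel. t \<in> {a<..<b} \<longrightarrow> norm y \<le> norm (y - d t)"
      using R0[of y] R[of y] by eventually_elim auto
  qed
  then show ?thesis
    using C(2) by eventually_elim (auto intro: eq_0_if_norm_le_norm_diff_on_dense)
qed

lemma weak_deriv_subinterval:
  fixes g g' :: "real \<Rightarrow> 'a::banach"
  assumes "weak_deriv a0 b0 g g'" "a0 \<le> a" "b \<le> b0"
  shows "weak_deriv a b g g'"
  unfolding weak_deriv_def
proof (intro allI impI)
  fix \<phi> assume \<phi>: "test_fun a b \<phi>"
  obtain c d where cd: "a < c" "c \<le> d" "d < b" "\<And>t. t \<notin> {c..d} \<Longrightarrow> \<phi> t = 0"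
    using test_funE[OF \<phi>] by blast
  have "test_fun a0 b0 \<phi>" using test_fun_subinterval[OF \<phi> assms(2,3)] .
  then obtain I where I: "((\<lambda>t. deriv \<phi> t *\<^sub>R g t) has_integral - I) {a0<..<b0}"
      "((\<lambda>t. \<phi> t *\<^sub>R g' t) has_integral I) {a0<..<b0}"
    using assms(1) unfolding weak_deriv_def by blast
  have sub: "{a<..<b} \<subseteq> {a0<..<b0}" using assms(2,3) by auto
  have dz: "deriv \<phi> t = 0" if "t \<notin> {c..d}" for t by (rule deriv_eq_0_outside[OF cd(4) that])
  have out: "t \<notin> {c..d}" if "t \<in> {a0<..<b0} - {a<..<b}" for t using that cd by auto
  have "((\<lambda>t. deriv \<phi> t *\<^sub>R g t) has_integral - I) {a<..<b} \<longleftrightarrow> ((\<lambda>t. deriv \<phi> t *\<^sub>R g t) has_integral - I) {a0<..<b0}"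
  proof (rule has_integral_subset_eq[OF sub])
    fix x assume "x \<in> {a0<..<b0} - {a<..<b}"
    then have "deriv \<phi> x = 0" by (intro dz out)
    then show "deriv \<phi> x *\<^sub>R g x = 0" by simp
  qed
  moreover have "((\<lambda>t. \<phi> t *\<^sub>R g' t) has_integral I) {a<..<b} \<longleftrightarrow> ((\<lambda>t. \<phi> t *\<^sub>R g' t) has_integral I) {a0<..<b0}"
  proof (rule has_integral_subset_eq[OF sub])
    fix x assume "x \<in> {a0<..<b0} - {a<..<b}"
    then have "\<phi> x = 0" by (intro cd(4) out)
    then show "\<phi> x *\<^sub>R g' x = 0" by simp
  qed
  ultimately have "((\<lambda>t. deriv \<phi> t *\<^sub>R g t) has_integral - I) {a<..<b}" "((\<lambda>t. \<phi> t *\<^sub>R g' t) has_integral I) {a<..<b}"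
    using I by blast+
  then show "\<exists>I. ((\<lambda>t. deriv \<phi> t *\<^sub>R g t) has_integral - I) {a<..<b} \<and>
      ((\<lambda>t. \<phi> t *\<^sub>R g' t) has_integral I) {a<..<b}" by blast
qed

lemma weak_deriv_cong:
  fixes g g' :: "real \<Rightarrow> 'a::banach"
  assumes "weak_deriv a b g1 g1'" "\<And>t. t \<in> {a<..<b} \<Longrightarrow> g1 t = g2 t" "\<And>t. t \<in> {a<..<b} \<Longrightarrow> g1' t = g2' t"
  shows "weak_deriv a b g2 g2'"
  unfolding weak_deriv_def
proof (intro allI impI)
  fix \<phi> assume \<phi>: "test_fun a b \<phi>"
  then obtain I where I: "((\<lambda>t. deriv \<phi> t *\<^sub>R g1 t) has_integral - I) {a<..<b}"
      "((\<lambda>t. \<phi> t *\<^sub>R g1' t) has_integral I) {a<..<b}"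
    using assms(1) unfolding weak_deriv_def by blast
  have "((\<lambda>t. deriv \<phi> t *\<^sub>R g2 t) has_integral - I) {a<..<b}"
    by (rule has_integral_spike[OF negligible_empty _ I(1)]) (use assms(2) in auto)
  moreover have "((\<lambda>t. \<phi> t *\<^sub>R g2' t) has_integral I) {a<..<b}"
    by (rule has_integral_spike[OF negligible_empty _ I(2)]) (use assms(3) in auto)
  ultimately show "\<exists>I. ((\<lambda>t. deriv \<phi> t *\<^sub>R g2 t) has_integral - I) {a<..<b} \<and>
      ((\<lambda>t. \<phi> t *\<^sub>R g2' t) has_integral I) {a<..<b}" by blast
qed

lemma weak_deriv_diff:
  fixes g1 g2 g1' g2' :: "real \<Rightarrow> 'a::banach"
  assumes "weak_deriv a b g1 g1'" "weak_deriv a b g2 g2'"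
  shows "weak_deriv a b (\<lambda>t. g1 t - g2 t) (\<lambda>t. g1' t - g2' t)"
  unfolding weak_deriv_def
proof (intro allI impI)
  fix \<phi> assume \<phi>: "test_fun a b \<phi>"
  obtain I1 where I1: "((\<lambda>t. deriv \<phi> t *\<^sub>R g1 t) has_integral - I1) {a<..<b}"
      "((\<lambda>t. \<phi> t *\<^sub>R g1' t) has_integral I1) {a<..<b}"
    using assms(1) \<phi> unfolding weak_deriv_def by blast
  obtain I2 where I2: "((\<lambda>t. deriv \<phi> t *\<^sub>R g2 t) has_integral - I2) {a<..<b}"
      "((\<lambda>t. \<phi> t *\<^sub>R g2' t) has_integral I2) {a<..<b}"
    using assms(2) \<phi> unfolding weak_deriv_def by blast
  have "((\<lambda>t. deriv \<phi> t *\<^sub>R (g1 t - g2 t)) has_integral - (I1 - I2)) {a<..<b}"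
    using has_integral_diff[OF I1(1) I2(1)] by (simp add: scaleR_diff_right)
  moreover have "((\<lambda>t. \<phi> t *\<^sub>R (g1' t - g2' t)) has_integral (I1 - I2)) {a<..<b}"
    using has_integral_diff[OF I1(2) I2(2)] by (simp add: scaleR_diff_right)
  ultimately show "\<exists>I. ((\<lambda>t. deriv \<phi> t *\<^sub>R (g1 t - g2 t)) has_integral - I) {a<..<b} \<and>
      ((\<lambda>t. \<phi> t *\<^sub>R (g1' t - g2' t)) has_integral I) {a<..<b}" by blast
qed

lemma weak_deriv_diff_has_integral_0:
  fixes g g1 g2 :: "real \<Rightarrow> 'a::banach"
  assumes "weak_deriv a b g g1" "weak_deriv a b g g2" "test_fun a b \<phi>"
  shows "((\<lambda>t. \<phi> t *\<^sub>R (g1 t - g2 t)) has_integral 0) {a<..<b}"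
proof -
  obtain I1 where I1: "((\<lambda>t. deriv \<phi> t *\<^sub>R g t) has_integral - I1) {a<..<b}"
      "((\<lambda>t. \<phi> t *\<^sub>R g1 t) has_integral I1) {a<..<b}"
    using assms(1,3) unfolding weak_deriv_def by blast
  obtain I2 where I2: "((\<lambda>t. deriv \<phi> t *\<^sub>R g t) has_integral - I2) {a<..<b}"
      "((\<lambda>t. \<phi> t *\<^sub>R g2 t) has_integral I2) {a<..<b}"
    using assms(2,3) unfolding weak_deriv_def by blast
  have "I1 = I2" using has_integral_unique[OF I1(1) I2(1)] by simp
  then show ?thesis using has_integral_diff[OF I1(2) I2(2)] by (simp add: scaleR_diff_right)
qed

lemma weak_deriv_unique:
  fixes g g1 g2 :: "real \<Rightarrow> 'a::banach"
  assumes wd1: "weak_deriv a b g g1" and wd2: "weak_deriv a b g g2"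
    and L1: "Lpw a b \<kappa> p g1" and L2: "Lpw a b \<kappa> p g2"
    and a0: "0 \<le> a" and p1: "1 \<le> p" and k0: "0 \<le> \<kappa>"
  shows "AE t in lborel. t \<in> {a<..<b} \<longrightarrow> g1 t = g2 t"
proof -
  obtain r1 where r1: "r1 \<in> borel_measurable lborel" "\<And>t. 0 \<le> r1 t"
    "AE t in lborel. t \<in> {a<..<b} \<longrightarrow> norm (g1 t) = r1 t"
    "\<And>s t. 0 < s \<Longrightarrow> set_integrable lborel ({a<..<b} \<inter> {s..t}) r1"
    using Lpw_locally_integrable_norm[OF L1 p1 k0] by blast
  obtain r2 where r2: "r2 \<in> borel_measurable lborel" "\<And>t. 0 \<le> r2 t"
    "AE t in lborel. t \<in> {a<..<b} \<longrightarrow> norm (g2 t) = r2 t"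
    "\<And>s t. 0 < s \<Longrightarrow> set_integrable lborel ({a<..<b} \<inter> {s..t}) r2"
    using Lpw_locally_integrable_norm[OF L2 p1 k0] by blast
  have "AE t in lborel. t \<in> {a<..<b} \<longrightarrow> g1 t - g2 t = 0"
  proof (rule AE_zero_if_test_integrals_zero)
    show "strongly_measurable_on {a<..<b} (\<lambda>t. g1 t - g2 t)"
      using L1 L2 unfolding Lpw_def by (intro strongly_measurable_on_diff) auto
    show "(\<lambda>t. r1 t + r2 t) \<in> borel_measurable lborel" using r1(1) r2(1) by measurable
    show "AE t in lborel. t \<in> {a<..<b} \<longrightarrow> norm (g1 t - g2 t) \<le> r1 t + r2 t"
      using r1(3) r2(3) by eventually_elim (metis norm_triangle_ineq4)
    show "set_integrable lborel {s..t} (\<lambda>t. r1 t + r2 t)" if "a < s" "t < b" for s t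
    proof -
      have "{a<..<b} \<inter> {s..t} = {s..t}" "0 < s" using that a0 by auto
      then show ?thesis using r1(4)[of s t] r2(4)[of s t] by (simp add: set_integral_add)
    qed
  qed (rule weak_deriv_diff_has_integral_0[OF wd1 wd2])
  then show ?thesis by eventually_elim simp
qed

text \<open>\<open>W1pw_norm\<close> uses a weak derivative chosen by \<open>SOME\<close>; by uniqueness, any weak derivative
  in \<open>L\<^sup>p\<close> may be used instead.\<close>

lemma W1pw_norm_eq:
  fixes g g' :: "real \<Rightarrow> 'a::banach"
  assumes "weak_deriv a b g g'" "Lpw a b \<kappa> p g'" "0 \<le> a" "1 \<le> p" "0 \<le> \<kappa>"
  shows "W1pw_norm a b \<kappa> p g = (Lpw_norm a b \<kappa> p g powr p + Lpw_norm a b \<kappa> p g' powr p) powr (1 / p)"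
proof -
  let ?s = "SOME g'. weak_deriv a b g g' \<and> Lpw a b \<kappa> p g'"
  have s: "weak_deriv a b g ?s \<and> Lpw a b \<kappa> p ?s" using assms(1,2) by (rule someI[where x=g', OF conjI])
  have "AE t in lborel. t \<in> {a<..<b} \<longrightarrow> ?s t = g' t"
    using weak_deriv_unique[OF conjunct1[OF s] assms(1) conjunct2[OF s] assms(2) assms(3-5)] .
  then have "Lpw_norm a b \<kappa> p ?s = Lpw_norm a b \<kappa> p g'" by (rule Lpw_norm_AE_cong)
  then show ?thesis unfolding W1pw_norm_def by simp
qed

section \<open>Weak derivatives of zero extensions\<close>

lemma cutoff_left_endpoint: "cutoff a m a = 0"
  by (simp add: cutoff_def flat_step_eq_0)

lemma integral_deriv_cutoff_mult_le:
  fixes k :: "real \<Rightarrow> real"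
  assumes kc: "continuous_on {a..e} k" and \<delta>: "0 < \<delta>" "a + \<delta> < e"
    and k_near: "\<And>t. t \<in> {a..a + \<delta>} \<Longrightarrow> k t \<le> \<eta>" and k_le: "\<And>t. t \<in> {a..e} \<Longrightarrow> k t \<le> B"
    and B: "0 \<le> B" and \<eta>: "0 \<le> \<eta>"
  shows "integral {a..e} (\<lambda>t. deriv (cutoff a m) t * k t) \<le> \<eta> + (1 - cutoff a m (a + \<delta>)) * B"
proof -
  let ?\<chi> = "cutoff a m" and ?d = "deriv (cutoff a m)"
  have int: "(\<lambda>t. ?d t * k t) integrable_on {u..v}" if "{u..v} \<subseteq> {a..e}" for u v
    by (rule integrable_continuous_interval)
       (intro continuous_intros continuous_on_subset[OF kc that] continuous_on_deriv_cutoff)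
  have intd: "?d integrable_on {u..v}" for u v
    by (rule integrable_continuous_interval) (rule continuous_on_deriv_cutoff)
  have d0: "0 \<le> ?d t" for t by (rule deriv_cutoff_nonneg)
  have "integral {a..a+\<delta>} (\<lambda>t. ?d t * k t) \<le> integral {a..a+\<delta>} (\<lambda>t. ?d t * \<eta>)"
    using \<delta> k_near d0 by (intro integral_le int integrable_on_mult_left intd) (auto intro: mult_left_mono)
  also have "\<dots> = ?\<chi> (a+\<delta>) * \<eta>"
    using cutoff_fundamental_theorem[of a "a+\<delta>" a m] \<delta>
    by (simp add: integral_unique has_integral_mult_left cutoff_left_endpoint)
  also have "\<dots> \<le> \<eta>"
    using cutoff_le_1 \<eta> by (intro mult_left_le_one_le) (auto intro: cutoff_nonneg)
  finally have near: "integral {a..a+\<delta>} (\<lambda>t. ?d t * k t) \<le> \<eta>" .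
  have "integral {a+\<delta>..e} (\<lambda>t. ?d t * k t) \<le> integral {a+\<delta>..e} (\<lambda>t. ?d t * B)"
    using \<delta> k_le d0 by (intro integral_le int integrable_on_mult_left intd) (auto intro: mult_left_mono)
  also have "\<dots> = (?\<chi> e - ?\<chi> (a+\<delta>)) * B"
    using cutoff_fundamental_theorem[of "a+\<delta>" e a m] \<delta>
    by (simp add: integral_unique has_integral_mult_left)
  also have "\<dots> \<le> (1 - ?\<chi> (a+\<delta>)) * B"
    using cutoff_le_1 B by (intro mult_right_mono) auto
  finally have far: "integral {a+\<delta>..e} (\<lambda>t. ?d t * k t) \<le> (1 - ?\<chi> (a+\<delta>)) * B" .
  have "integral {a..e} (\<lambda>t. ?d t * k t)
      = integral {a..a+\<delta>} (\<lambda>t. ?d t * k t) + integral {a+\<delta>..e} (\<lambda>t. ?d t * k t)"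
    using Henstock_Kurzweil_Integration.integral_combine[of a "a+\<delta>" e "\<lambda>t. ?d t * k t"]
      int[of a e] \<delta> by simp
  then show ?thesis using near far by simp
qed

text \<open>The mass of \<open>\<chi>\<^sub>n'\<close> (at most \<open>1\<close>) concentrates at \<open>a\<close>, where \<open>k\<close> vanishes.\<close>

lemma integral_deriv_cutoff_mult_tendsto_0:
  fixes k :: "real \<Rightarrow> real"
  assumes kc: "continuous_on {a..e} k" and ka: "k a = 0" and ae: "a < e"
    and k0: "\<And>t. t \<in> {a..e} \<Longrightarrow> 0 \<le> k t"
  shows "(\<lambda>n. integral {a..e} (\<lambda>t. deriv (cutoff a (n + K)) t * k t)) \<longlonglongrightarrow> 0"
  unfolding LIMSEQ_iff
proof (intro allI impI)
  fix r :: real assume "0 < r"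
  define \<eta> where "\<eta> = r / 3"
  have "\<eta> > 0" using \<open>0 < r\<close> by (simp add: \<eta>_def)
  obtain B where B: "0 \<le> B" "\<And>t. t \<in> {a..e} \<Longrightarrow> norm (k t) \<le> B"
    using continuous_on_interval_bounded[OF kc] by blast
  obtain \<delta>0 where \<delta>0: "\<delta>0 > 0" "\<And>x'. x' \<in> {a..e} \<Longrightarrow> dist x' a < \<delta>0 \<Longrightarrow> dist (k x') (k a) < \<eta>"
    using kc[unfolded continuous_on_iff] ae \<open>\<eta> > 0\<close> by (meson atLeastAtMost_iff order.refl less_imp_le)
  define \<delta> where "\<delta> = min (\<delta>0/2) ((e - a)/2)"
  have \<delta>: "0 < \<delta>" "a + \<delta> < e" "\<delta> < \<delta>0"
    using \<delta>0(1) ae unfolding \<delta>_def min_def by (auto simp: field_simps)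
  have k_near: "k t \<le> \<eta>" if "t \<in> {a..a + \<delta>}" for t
    using \<delta>0(2)[of t] that \<delta> ka by (auto simp: dist_real_def)
  have "(\<lambda>n. cutoff a (n + K) (a + \<delta>)) \<longlonglongrightarrow> 1" using \<delta>(1) by (intro cutoff_tendsto_1) simp
  then obtain N where N: "\<And>n. n \<ge> N \<Longrightarrow> dist (cutoff a (n + K) (a + \<delta>)) 1 < \<eta> / (B + 1)"
    using \<open>\<eta> > 0\<close> B(1) unfolding LIMSEQ_def by (metis divide_pos_pos add_nonneg_pos zero_less_one)
  show "\<exists>no. \<forall>n\<ge>no. norm (integral {a..e} (\<lambda>t. deriv (cutoff a (n + K)) t * k t) - 0) < r"
  proof (intro exI allI impI)
    fix n assume "N \<le> n"
    have "(1 - cutoff a (n + K) (a + \<delta>)) * B \<le> \<eta> / (B + 1) * B"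
      using N[OF \<open>N \<le> n\<close>] B(1) cutoff_le_1[of a "n + K" "a + \<delta>"]
      by (intro mult_right_mono) (auto simp: dist_real_def)
    also have "\<dots> \<le> \<eta>" using B(1) \<open>\<eta> > 0\<close> by (simp add: field_simps)
    finally have "integral {a..e} (\<lambda>t. deriv (cutoff a (n + K)) t * k t) \<le> \<eta> + \<eta>"
      using integral_deriv_cutoff_mult_le[OF kc \<delta>(1,2) k_near, of B "n + K"] B \<open>\<eta> > 0\<close> by force
    moreover have "0 \<le> integral {a..e} (\<lambda>t. deriv (cutoff a (n + K)) t * k t)"
      using k0 deriv_cutoff_nonneg ae
      by (intro integral_nonneg integrable_continuous_interval continuous_intros
            continuous_on_deriv_cutoff kc) auto
    ultimately show "norm (integral {a..e} (\<lambda>t. deriv (cutoff a (n + K)) t * k t) - 0) < r"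
      using \<open>\<eta> > 0\<close> by (simp add: \<eta>_def)
  qed
qed

lemma integral_cutoff_tendsto:
  fixes f :: "real \<Rightarrow> 'a::banach" and r :: "real \<Rightarrow> real"
  assumes gi: "\<And>n. (\<lambda>t. cutoff a (n + K) t *\<^sub>R f t) integrable_on {a..e}"
    and rm[measurable]: "r \<in> borel_measurable lborel" and ri: "set_integrable lborel {a..e} r"
    and fr: "AE t in lborel. t \<in> {a..e} \<longrightarrow> norm (f t) \<le> r t"
  shows "f integrable_on {a..e}"
    "(\<lambda>n. integral {a..e} (\<lambda>t. cutoff a (n + K) t *\<^sub>R f t)) \<longlonglongrightarrow> integral {a..e} f"
proof -
  define err where "err n t = (1 - cutoff a (n + K) t) * r t" for n t
  have cm[measurable]: "cutoff a m \<in> borel_measurable lborel" for m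
    by (rule smooth_borel_measurable[OF smooth_cutoff])
  have c01: "0 \<le> 1 - cutoff a m t" "1 - cutoff a m t \<le> 1" for m t
    using cutoff_nonneg cutoff_le_1 by auto
  have errm: "err n \<in> borel_measurable lborel" for n unfolding err_def by measurable
  have err_le: "\<bar>err n x\<bar> \<le> \<bar>r x\<bar>" for n x
    using c01[of "n + K" x] by (simp add: err_def abs_mult mult_left_le_one_le)
  have err_lim: "AE x in lborel. x \<in> {a..e} \<longrightarrow> (\<lambda>n. err n x) \<longlonglongrightarrow> 0"
    using AE_lborel_singleton[of a]
  proof eventually_elim
    case (elim x)
    have "(\<lambda>n. (1 - cutoff a (n + K) x) * r x) \<longlonglongrightarrow> (1 - 1) * r x" if "a < x"
      by (intro tendsto_intros cutoff_tendsto_1 that)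
    then show ?case using elim by (auto simp: err_def)
  qed
  note err = integral_tendsto_0_dominated[OF errm set_integrable_abs[OF ri] err_le err_lim]
  have "AE x in lborel. x \<in> {a..e} \<longrightarrow> (\<forall>n. norm (f x - cutoff a (n + K) x *\<^sub>R f x) \<le> err n x)"
    using fr
  proof eventually_elim
    case (elim x)
    have "norm (f x - cutoff a m x *\<^sub>R f x) = (1 - cutoff a m x) * norm (f x)" for m
    proof -
      have "f x - cutoff a m x *\<^sub>R f x = (1 - cutoff a m x) *\<^sub>R f x"
        by (simp add: scaleR_diff_left)
      then show ?thesis using c01[of m x] by simp
    qed
    then show ?case using elim c01 by (auto simp: err_def intro: mult_left_mono)
  qed
  then show "f integrable_on {a..e}"
    "(\<lambda>n. integral {a..e} (\<lambda>t. cutoff a (n + K) t *\<^sub>R f t)) \<longlonglongrightarrow> integral {a..e} f"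
    using integral_tendsto_approx_AE[OF gi err(1)] err(2) by auto
qed

lemma integral_deriv_cutoff_mult_tendsto:
  fixes h :: "real \<Rightarrow> 'a::banach" and \<phi> :: "real \<Rightarrow> real"
  assumes ae: "a < e" and hc: "continuous_on {a..e} h" and ha: "h a = 0" and sm: "smooth \<phi>"
  shows "(\<lambda>n. integral {a..e} (\<lambda>t. deriv (\<lambda>t. \<phi> t * cutoff a (n + K) t) t *\<^sub>R h t))
    \<longlonglongrightarrow> integral {a..e} (\<lambda>t. deriv \<phi> t *\<^sub>R h t)"
proof -
  let ?\<chi> = "\<lambda>n. cutoff a (n + K)"
  have c: "continuous_on {a..e} \<phi>" "continuous_on {a..e} (deriv \<phi>)"
    "continuous_on {a..e} (?\<chi> n)" "continuous_on {a..e} (deriv (?\<chi> n))" for n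
    by (intro smooth_continuous_on smooth_deriv sm smooth_cutoff)+
  have int1: "(\<lambda>t. ?\<chi> n t *\<^sub>R (deriv \<phi> t *\<^sub>R h t)) integrable_on {a..e}" for n
    by (intro integrable_continuous_interval continuous_intros c hc)
  have int2: "(\<lambda>t. (deriv (?\<chi> n) t * \<phi> t) *\<^sub>R h t) integrable_on {a..e}" for n
    by (intro integrable_continuous_interval continuous_intros c hc)
  have split: "integral {a..e} (\<lambda>t. deriv (\<lambda>t. \<phi> t * ?\<chi> n t) t *\<^sub>R h t)
      = integral {a..e} (\<lambda>t. ?\<chi> n t *\<^sub>R (deriv \<phi> t *\<^sub>R h t))
        + integral {a..e} (\<lambda>t. (deriv (?\<chi> n) t * \<phi> t) *\<^sub>R h t)" for n
  proof -
    have "deriv (\<lambda>t. \<phi> t * ?\<chi> n t) t = deriv \<phi> t * ?\<chi> n t + deriv (?\<chi> n) t * \<phi> t" for t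
      by (intro DERIV_imp_deriv DERIV_mult smooth_has_real_derivative sm smooth_cutoff)
    then show ?thesis
      using integral_add[OF int1 int2] by (simp add: scaleR_add_left mult.commute)
  qed
  define hx where "hx t = h (max a (min e t))" for t
  have hxc: "continuous_on UNIV hx"
    unfolding hx_def using ae
    by (intro continuous_on_compose2[OF hc, of UNIV "\<lambda>t. max a (min e t)"] continuous_intros) auto
  have lim1: "(\<lambda>n. integral {a..e} (\<lambda>t. ?\<chi> n t *\<^sub>R (deriv \<phi> t *\<^sub>R h t)))
      \<longlonglongrightarrow> integral {a..e} (\<lambda>t. deriv \<phi> t *\<^sub>R h t)"
  proof (rule integral_cutoff_tendsto(2)[OF int1])
    have "continuous_on UNIV (\<lambda>t. norm (deriv \<phi> t *\<^sub>R hx t))"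
      using hxc smooth_continuous_on[OF smooth_deriv[OF sm]] by (intro continuous_intros)
    then show "(\<lambda>t. norm (deriv \<phi> t *\<^sub>R hx t)) \<in> borel_measurable lborel"
      "set_integrable lborel {a..e} (\<lambda>t. norm (deriv \<phi> t *\<^sub>R hx t))"
      by (auto intro: borel_measurable_continuous_onI borel_integrable_atLeastAtMost'
               continuous_on_subset)
    show "AE t in lborel. t \<in> {a..e} \<longrightarrow> norm (deriv \<phi> t *\<^sub>R h t) \<le> norm (deriv \<phi> t *\<^sub>R hx t)"
      by (intro AE_I2) (simp add: hx_def)
  qed
  have lim2: "(\<lambda>n. integral {a..e} (\<lambda>t. (deriv (?\<chi> n) t * \<phi> t) *\<^sub>R h t)) \<longlonglongrightarrow> 0"
  proof (rule Lim_null_comparison)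
    have "continuous_on {a..e} (\<lambda>t. norm (\<phi> t *\<^sub>R h t))" by (intro continuous_intros c hc)
    then show "(\<lambda>n. integral {a..e} (\<lambda>t. deriv (?\<chi> n) t * norm (\<phi> t *\<^sub>R h t))) \<longlonglongrightarrow> 0"
      using ha ae by (intro integral_deriv_cutoff_mult_tendsto_0) auto
    show "\<forall>\<^sub>F n in sequentially. norm (integral {a..e} (\<lambda>t. (deriv (?\<chi> n) t * \<phi> t) *\<^sub>R h t))
        \<le> integral {a..e} (\<lambda>t. deriv (?\<chi> n) t * norm (\<phi> t *\<^sub>R h t))"
    proof (intro always_eventually allI integral_norm_bound_integral[OF int2])
      show "(\<lambda>t. deriv (?\<chi> n) t * norm (\<phi> t *\<^sub>R h t)) integrable_on {a..e}" for n
        by (intro integrable_continuous_interval continuous_intros c hc)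
      show "norm ((deriv (?\<chi> n) t * \<phi> t) *\<^sub>R h t) \<le> deriv (?\<chi> n) t * norm (\<phi> t *\<^sub>R h t)" for n t
        using deriv_cutoff_nonneg[of a "n + K" t] by (simp add: abs_mult)
    qed
  qed
  show ?thesis unfolding split using tendsto_add[OF lim1 lim2] by simp
qed

lemma weak_deriv_cutoff_test:
  fixes g g' h :: "real \<Rightarrow> 'a::banach" and \<phi> :: "real \<Rightarrow> real"
  assumes m: "0 < m" "a + 1 / real m < e" and e\<tau>: "e < \<tau>"
    and wd: "weak_deriv a \<tau> g g'"
    and gh: "AE t in lborel. t \<in> {a<..<\<tau>} \<longrightarrow> g t = h t"
    and sm: "smooth \<phi>" and supp: "\<And>t. e < t \<Longrightarrow> \<phi> t = 0"
  shows "((\<lambda>t. cutoff a m t *\<^sub>R (\<phi> t *\<^sub>R g' t)) has_integral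
    - integral {a..e} (\<lambda>t. deriv (\<lambda>t. \<phi> t * cutoff a m t) t *\<^sub>R h t)) {a..e}"
proof -
  define \<psi> where "\<psi> t = \<phi> t * cutoff a m t" for t
  have left: "a < a + 1 / real m" using m by simp
  have psi_out: "\<psi> t = 0" if "t \<notin> {a + 1 / real m..e}" for t
  proof (cases "e < t")
    case False
    then have "cutoff a m t = 0" using that m by (intro cutoff_eq_0) auto
    then show ?thesis by (simp add: \<psi>_def)
  qed (simp add: \<psi>_def supp)
  have "test_fun a \<tau> \<psi>"
    by (rule test_funI[OF _ left less_imp_le[OF m(2)] e\<tau> psi_out])
       (unfold \<psi>_def, rule smooth_mult[OF sm smooth_cutoff])
  then obtain I where
    I1: "((\<lambda>t. deriv \<psi> t *\<^sub>R g t) has_integral - I) {a<..<\<tau>}" and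
    I2: "((\<lambda>t. \<psi> t *\<^sub>R g' t) has_integral I) {a<..<\<tau>}"
    using wd unfolding weak_deriv_def by blast
  have on_ae: "(f has_integral J) {a<..<\<tau>} \<longleftrightarrow> (f has_integral J) {a..e}"
    if f0: "\<And>t. t \<notin> {a + 1 / real m..e} \<Longrightarrow> f t = 0" for f :: "real \<Rightarrow> 'a" and J
  proof (rule has_integral_supp_eq[of "{a}"])
    show "f t = 0" if "t \<in> {a..e} - {a<..<\<tau>}" "t \<notin> {a}" for t
      using that e\<tau> by auto
    show "f t = 0" if "t \<in> {a<..<\<tau>} - {a..e}" for t
      using that left by (intro f0) auto
  qed simp
  have "((\<lambda>t. deriv \<psi> t *\<^sub>R g t) has_integral - I) {a<..<\<tau>}
      \<longleftrightarrow> ((\<lambda>t. deriv \<psi> t *\<^sub>R h t) has_integral - I) {a<..<\<tau>}"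
    by (rule has_integral_AE_cong) (use gh in \<open>eventually_elim, auto\<close>)
  moreover have z1: "deriv \<psi> t *\<^sub>R h t = 0" if "t \<notin> {a + 1 / real m..e}" for t
    using deriv_eq_0_outside[where \<phi>=\<psi>, OF psi_out that] by simp
  ultimately have "((\<lambda>t. deriv \<psi> t *\<^sub>R h t) has_integral - I) {a..e}"
    using I1 on_ae[OF z1] by simp
  then have D: "integral {a..e} (\<lambda>t. deriv (\<lambda>t. \<phi> t * cutoff a m t) t *\<^sub>R h t) = - I"
    unfolding \<psi>_def[abs_def] by (rule integral_unique)
  have z2: "\<psi> t *\<^sub>R g' t = 0" if "t \<notin> {a + 1 / real m..e}" for t
    using psi_out[OF that] by simp
  have "((\<lambda>t. \<psi> t *\<^sub>R g' t) has_integral I) {a..e}"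
    using I2 on_ae[OF z2] by simp
  moreover have "\<psi> t *\<^sub>R g' t = cutoff a m t *\<^sub>R (\<phi> t *\<^sub>R g' t)" for t
    by (simp add: \<psi>_def)
  ultimately show ?thesis unfolding D by simp
qed

text \<open>Integration by parts against a test function supported in \<open>(-\<infinity>, e]\<close>: the boundary
  term at \<open>a\<close> vanishes because \<open>h a = 0\<close>. The test function is cut off near \<open>a\<close> by
  \<open>cutoff a (n + K)\<close>, and both sides pass to the limit.\<close>

lemma weak_deriv_by_parts_left_endpoint:
  fixes g g' h :: "real \<Rightarrow> 'a::banach" and r :: "real \<Rightarrow> real" and \<phi> :: "real \<Rightarrow> real"
  assumes ae: "a < e" and e\<tau>: "e < \<tau>"
    and wd: "weak_deriv a \<tau> g g'"
    and hc: "continuous_on {a..\<tau>} h" and ha: "h a = 0"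
    and gh: "AE t in lborel. t \<in> {a<..<\<tau>} \<longrightarrow> g t = h t"
    and rm: "r \<in> borel_measurable lborel"
    and rg: "AE t in lborel. t \<in> {a<..<\<tau>} \<longrightarrow> norm (g' t) \<le> r t"
    and ri: "set_integrable lborel {a..e} r"
    and sm: "smooth \<phi>" and supp: "\<And>t. e < t \<Longrightarrow> \<phi> t = 0"
  shows "((\<lambda>t. deriv \<phi> t *\<^sub>R h t) has_integral - integral {a..e} (\<lambda>t. \<phi> t *\<^sub>R g' t)) {a..e}
    \<and> (\<lambda>t. \<phi> t *\<^sub>R g' t) integrable_on {a..e}"
proof -
  obtain K0 where "inverse (real (Suc K0)) < e - a" using ae reals_Archimedean[of "e - a"] by auto
  then obtain K :: nat where K: "0 < K" "1 / real K < e - a"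
    by (intro that[of "Suc K0"]) (simp_all add: divide_inverse)
  define D where "D n = integral {a..e} (\<lambda>t. deriv (\<lambda>t. \<phi> t * cutoff a (n + K) t) t *\<^sub>R h t)" for n
  have ints: "((\<lambda>t. cutoff a (n + K) t *\<^sub>R (\<phi> t *\<^sub>R g' t)) has_integral - D n) {a..e}" for n
  proof -
    have "1 / real (n + K) \<le> 1 / real K" using K(1) by (intro divide_left_mono) auto
    then show ?thesis unfolding D_def
      using K by (intro weak_deriv_cutoff_test[OF _ _ e\<tau> wd gh sm supp]) auto
  qed
  obtain M where M: "\<And>x. x \<in> {a..e} \<Longrightarrow> \<bar>\<phi> x\<bar> \<le> M"
    using smooth_bounded_on_interval[OF sm] by blast
  have bound: "AE t in lborel. t \<in> {a..e} \<longrightarrow> norm (\<phi> t *\<^sub>R g' t) \<le> \<bar>M\<bar> * r t"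
    using rg AE_lborel_singleton[of a]
  proof eventually_elim
    case (elim t)
    show ?case
    proof
      assume t: "t \<in> {a..e}"
      then have "norm (g' t) \<le> r t" using elim e\<tau> by auto
      moreover have "\<bar>\<phi> t\<bar> \<le> \<bar>M\<bar>" using M[OF t] by linarith
      ultimately show "norm (\<phi> t *\<^sub>R g' t) \<le> \<bar>M\<bar> * r t" by (simp add: mult_mono)
    qed
  qed
  have "(\<lambda>t. \<bar>M\<bar> * r t) \<in> borel_measurable lborel" using rm by measurable
  note lim = integral_cutoff_tendsto[OF has_integral_integrable[OF ints] this
      set_integrable_mult_right[OF ri] bound]
  have "(\<lambda>n. - D n) \<longlonglongrightarrow> integral {a..e} (\<lambda>t. \<phi> t *\<^sub>R g' t)"
    using lim(2) unfolding integral_unique[OF ints] .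
  have hsub: "continuous_on {a..e} h" by (rule continuous_on_subset[OF hc]) (use e\<tau> in auto)
  have "D \<longlonglongrightarrow> integral {a..e} (\<lambda>t. deriv \<phi> t *\<^sub>R h t)"
    unfolding D_def by (rule integral_deriv_cutoff_mult_tendsto[OF ae hsub ha sm])
  from LIMSEQ_unique[OF tendsto_minus[OF this] \<open>(\<lambda>n. - D n) \<longlonglongrightarrow> _\<close>]
  have eq: "integral {a..e} (\<lambda>t. deriv \<phi> t *\<^sub>R h t) = - integral {a..e} (\<lambda>t. \<phi> t *\<^sub>R g' t)"
    by (metis minus_minus)
  have "continuous_on {a..e} (deriv \<phi>)" by (rule smooth_continuous_on[OF smooth_deriv[OF sm]])
  then have "(\<lambda>t. deriv \<phi> t *\<^sub>R h t) integrable_on {a..e}"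
    using hsub by (intro integrable_continuous_interval continuous_on_scaleR)
  then have "((\<lambda>t. deriv \<phi> t *\<^sub>R h t) has_integral integral {a..e} (\<lambda>t. deriv \<phi> t *\<^sub>R h t)) {a..e}"
    by (rule integrable_integral)
  then show ?thesis unfolding eq using lim(1) by blast
qed

lemma set_integrable_Icc_if_Ioc:
  fixes r :: "real \<Rightarrow> real"
  assumes "set_integrable lborel {a<..e} r" "r \<in> borel_measurable lborel"
  shows "set_integrable lborel {a..e} r"
proof -
  note assms(2)[measurable]
  have "integrable lborel (\<lambda>x. indicator {a<..e} x *\<^sub>R r x) \<longleftrightarrow> integrable lborel (\<lambda>x. indicator {a..e} x *\<^sub>R r x)"
    by (rule integrable_cong_AE) (use AE_lborel_singleton[of a] in \<open>auto elim!: AE_mp simp: indicator_def\<close>)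
  then show ?thesis using assms(1) unfolding set_integrable_def by blast
qed

lemma weak_deriv_zero_extension_dominated:
  fixes g g' h :: "real \<Rightarrow> 'a::banach" and r :: "real \<Rightarrow> real"
  assumes a0: "0 < a" and a\<tau>: "a < \<tau>"
    and wd: "weak_deriv a \<tau> g g'"
    and hc: "continuous_on {a..\<tau>} h" and ha: "h a = 0"
    and gh: "AE t in lborel. t \<in> {a<..<\<tau>} \<longrightarrow> g t = h t"
    and rm: "r \<in> borel_measurable lborel"
    and rg: "AE t in lborel. t \<in> {a<..<\<tau>} \<longrightarrow> norm (g' t) \<le> r t"
    and ri: "\<And>e. a < e \<Longrightarrow> e < \<tau> \<Longrightarrow> set_integrable lborel {a..e} r"
  shows "weak_deriv 0 \<tau> (\<lambda>t. if t \<le> a then 0 else g t) (\<lambda>t. if t \<le> a then 0 else g' t)"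
  unfolding weak_deriv_def
proof (intro allI impI)
  let ?G = "\<lambda>t. if t \<le> a then 0 else g t" and ?G' = "\<lambda>t. if t \<le> a then 0 else g' t"
  fix \<phi> assume \<phi>: "test_fun 0 \<tau> \<phi>"
  obtain c e where ce: "0 < c" "c \<le> e" "e < \<tau>" "\<And>t. t \<notin> {c..e} \<Longrightarrow> \<phi> t = 0"
    using test_funE[OF \<phi>] by blast
  have dz: "deriv \<phi> t = 0" if "t \<notin> {c..e}" for t by (rule deriv_eq_0_outside[OF ce(4) that])
  show "\<exists>I. ((\<lambda>t. deriv \<phi> t *\<^sub>R ?G t) has_integral - I) {0<..<\<tau>} \<and>
            ((\<lambda>t. \<phi> t *\<^sub>R ?G' t) has_integral I) {0<..<\<tau>}"
  proof (cases "e \<le> a")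
    case True
    have z: "deriv \<phi> t *\<^sub>R ?G t = 0" "\<phi> t *\<^sub>R ?G' t = 0" for t
    proof -
      have "t \<le> a \<or> t \<notin> {c..e}" using True by auto
      then show "deriv \<phi> t *\<^sub>R ?G t = 0" "\<phi> t *\<^sub>R ?G' t = 0" using dz ce(4) by auto
    qed
    show ?thesis by (intro exI[of _ 0]) (simp only: z minus_zero has_integral_0 simp_thms)
  next
    case False
    then have ae: "a < e" by simp
    have "e < t \<Longrightarrow> \<phi> t = 0" for t using ce(4) by simp
    note by_parts = weak_deriv_by_parts_left_endpoint[OF ae ce(3) wd hc ha gh rm rg
        ri[OF ae ce(3)] test_fun_smooth[OF \<phi>] this]
    define I where "I = integral {a..e} (\<lambda>t. \<phi> t *\<^sub>R g' t)"
    have to_Ioo: "(f has_integral J) {a..e} \<longleftrightarrow> (f has_integral J) {0<..<\<tau>}"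
      if "\<And>t. t \<le> a \<or> t \<notin> {c..e} \<Longrightarrow> f t = 0" for f :: "real \<Rightarrow> 'a" and J
      by (rule has_integral_subset_eq) (use a0 ce(3) that in auto)
    have "AE t in lborel. t \<in> {a..e} \<longrightarrow> deriv \<phi> t *\<^sub>R h t = deriv \<phi> t *\<^sub>R ?G t"
      using gh AE_lborel_singleton[of a] by eventually_elim (use ce(3) in auto)
    from has_integral_AE_cong[OF this] by_parts
    have "((\<lambda>t. deriv \<phi> t *\<^sub>R ?G t) has_integral - I) {a..e}" unfolding I_def by blast
    moreover have z1: "(\<lambda>t. deriv \<phi> t *\<^sub>R ?G t) t = 0" if "t \<le> a \<or> t \<notin> {c..e}" for t
      using that dz by auto
    ultimately have 1: "((\<lambda>t. deriv \<phi> t *\<^sub>R ?G t) has_integral - I) {0<..<\<tau>}"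
      using to_Ioo[of "\<lambda>t. deriv \<phi> t *\<^sub>R ?G t", OF z1] by simp
    have "((\<lambda>t. \<phi> t *\<^sub>R g' t) has_integral I) {a..e}"
      using by_parts unfolding I_def by (simp add: has_integral_integral)
    then have "((\<lambda>t. \<phi> t *\<^sub>R ?G' t) has_integral I) {a..e}"
      by (rule has_integral_spike[OF negligible_sing[of a], rotated]) auto
    moreover have z2: "(\<lambda>t. \<phi> t *\<^sub>R ?G' t) t = 0" if "t \<le> a \<or> t \<notin> {c..e}" for t
      using that ce(4) by auto
    ultimately have 2: "((\<lambda>t. \<phi> t *\<^sub>R ?G' t) has_integral I) {0<..<\<tau>}"
      using to_Ioo[of "\<lambda>t. \<phi> t *\<^sub>R ?G' t", OF z2] by simp
    from 1 2 show ?thesis by blast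
  qed
qed

lemma weak_deriv_zero_extension:
  fixes g g' h :: "real \<Rightarrow> 'a::banach"
  assumes wd: "weak_deriv a \<tau> g g'" and L: "Lpw a \<tau> \<kappa> p g'" and p1: "1 \<le> p" and k0: "0 \<le> \<kappa>"
    and a0: "0 \<le> a" and a\<tau>: "a < \<tau>"
    and hc: "continuous_on {a..\<tau>} h" and ha: "h a = 0"
    and gh: "AE t in lborel. t \<in> {a<..<\<tau>} \<longrightarrow> g t = h t"
  shows "weak_deriv 0 \<tau> (\<lambda>t. if t \<le> a then 0 else g t) (\<lambda>t. if t \<le> a then 0 else g' t)"
proof (cases "a = 0")
  case True
  have "weak_deriv 0 \<tau> g g'" using wd True by simp
  then show ?thesis by (rule weak_deriv_cong) (use True in auto)
next
  case False
  then have apos: "0 < a" using a0 by simp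
  obtain r where r: "r \<in> borel_measurable lborel" "\<And>t. 0 \<le> r t"
    "AE t in lborel. t \<in> {a<..<\<tau>} \<longrightarrow> norm (g' t) = r t"
    "\<And>s t. 0 < s \<Longrightarrow> set_integrable lborel ({a<..<\<tau>} \<inter> {s..t}) r"
    using Lpw_locally_integrable_norm[OF L p1 k0] by blast
  have ri: "set_integrable lborel {a..e} r" if "a < e" "e < \<tau>" for e
  proof -
    have "{a<..<\<tau>} \<inter> {a..e} = {a<..e}" using that by auto
    then show ?thesis using r(4)[OF apos, of e] r(1) by (simp add: set_integrable_Icc_if_Ioc)
  qed
  have rg: "AE t in lborel. t \<in> {a<..<\<tau>} \<longrightarrow> norm (g' t) \<le> r t"
    using r(3) by eventually_elim simp
  show ?thesis by (rule weak_deriv_zero_extension_dominated[OF apos a\<tau> wd hc ha gh r(1) rg ri])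
qed
section \<open>Maximal regularity on subintervals\<close>

lemma MR_subinterval:
  assumes "MR J p \<kappa> a0 b0 u" "a0 \<le> a" "b \<le> b0"
  shows "MR J p \<kappa> a b u"
  using assms Lpw_subinterval[of a0 b0 \<kappa> p _ a b] weak_deriv_subinterval[of a0 b0 _ _ a b]
  unfolding MR_def W1pw_def by meson

lemma trace_left_subinterval:
  assumes "continuous_on {a0..b0} h" "AE t in lborel. t \<in> {a0<..<b0} \<longrightarrow> g t = h t" "a0 \<le> a" "b \<le> b0"
  shows "trace_left a b g (h a)"
  unfolding trace_left_def
proof (intro exI conjI)
  show "continuous_on {a..b} h" by (rule continuous_on_subset[OF assms(1)]) (use assms(3,4) in auto)
  show "AE t in lborel. t \<in> {a<..<b} \<longrightarrow> g t = h t" using assms(2) by eventually_elim (use assms(3,4) in auto)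
qed simp

lemma strong_solution_subinterval:
  assumes "strong_solution J A a0 b0 f x0 u" "a0 \<le> a" "b \<le> b0"
    "trace_left a b (\<lambda>t. blinfun_apply J (u t)) y" "\<And>t. t \<in> {a<..<b} \<Longrightarrow> f' t = f t"
  shows "strong_solution J A a b f' y u"
proof -
  obtain u' where u': "Lpw a0 b0 0 1 u'" "weak_deriv a0 b0 (\<lambda>t. blinfun_apply J (u t)) u'"
    "AE t in lborel. t \<in> {a0<..<b0} \<longrightarrow> u' t + blinfun_apply (A t) (u t) = f t"
    using assms(1) unfolding strong_solution_def by blast
  have 1: "Lpw a b 0 1 u'" by (rule Lpw_subinterval[OF u'(1) assms(2,3)])
  have 2: "weak_deriv a b (\<lambda>t. blinfun_apply J (u t)) u'" by (rule weak_deriv_subinterval[OF u'(2) assms(2,3)])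
  have 3: "AE t in lborel. t \<in> {a<..<b} \<longrightarrow> u' t + blinfun_apply (A t) (u t) = f' t"
    using u'(3) by eventually_elim (use assms(2,3,5) in auto)
  have L: "Lpw a b 0 1 u" "Lpw a b 0 1 (\<lambda>t. blinfun_apply J (u t))" "Lpw a b 0 1 (\<lambda>t. blinfun_apply (A t) (u t))"
    using assms(1) Lpw_subinterval[OF _ assms(2,3)] unfolding strong_solution_def by blast+
  show ?thesis unfolding strong_solution_def using L 1 2 3 assms(4) by blast
qed

lemma MR_diff:
  assumes "MR J p \<kappa> a b u" "MR J p \<kappa> a b v" "0 < p"
  shows "MR J p \<kappa> a b (\<lambda>t. u t - v t)"
proof -
  obtain g1 where g1: "weak_deriv a b (\<lambda>t. blinfun_apply J (u t)) g1" "Lpw a b \<kappa> p g1"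
    using assms(1) unfolding MR_def W1pw_def by blast
  obtain g2 where g2: "weak_deriv a b (\<lambda>t. blinfun_apply J (v t)) g2" "Lpw a b \<kappa> p g2"
    using assms(2) unfolding MR_def W1pw_def by blast
  have eq: "(\<lambda>t. blinfun_apply J (u t - v t)) = (\<lambda>t. blinfun_apply J (u t) - blinfun_apply J (v t))"
    by (simp add: blinfun.diff_right)
  have "Lpw a b \<kappa> p (\<lambda>t. u t - v t)"
    using assms unfolding MR_def by (intro Lpw_diff) auto
  moreover have "Lpw a b \<kappa> p (\<lambda>t. blinfun_apply J (u t - v t))"
    unfolding eq using assms unfolding MR_def W1pw_def by (intro Lpw_diff) auto
  moreover have "weak_deriv a b (\<lambda>t. blinfun_apply J (u t - v t)) (\<lambda>t. g1 t - g2 t)"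
    unfolding eq by (rule weak_deriv_diff[OF g1(1) g2(1)])
  moreover have "Lpw a b \<kappa> p (\<lambda>t. g1 t - g2 t)" by (rule Lpw_diff[OF g1(2) g2(2) assms(3)])
  ultimately show ?thesis unfolding MR_def W1pw_def by blast
qed

lemma trace_left_diff:
  fixes g1 g2 :: "real \<Rightarrow> 'a::real_normed_vector"
  assumes "trace_left a b g1 x1" "trace_left a b g2 x2"
  shows "trace_left a b (\<lambda>t. g1 t - g2 t) (x1 - x2)"
proof -
  obtain h1 where h1: "continuous_on {a..b} h1" "h1 a = x1" "AE t in lborel. t \<in> {a<..<b} \<longrightarrow> g1 t = h1 t"
    using assms(1) unfolding trace_left_def by blast
  obtain h2 where h2: "continuous_on {a..b} h2" "h2 a = x2" "AE t in lborel. t \<in> {a<..<b} \<longrightarrow> g2 t = h2 t"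
    using assms(2) unfolding trace_left_def by blast
  have "AE t in lborel. t \<in> {a<..<b} \<longrightarrow> g1 t - g2 t = h1 t - h2 t"
    using h1(3) h2(3) by eventually_elim auto
  then show ?thesis
    unfolding trace_left_def using h1(1,2) h2(1,2) by (intro exI[of _ "\<lambda>t. h1 t - h2 t"]) (auto intro: continuous_intros)
qed

lemma strong_solution_diff:
  assumes "strong_solution J A a b f 0 u" "strong_solution J A a b f 0 v"
  shows "strong_solution J A a b (\<lambda>t. 0) 0 (\<lambda>t. u t - v t)"
proof -
  obtain u1 where u1: "Lpw a b 0 1 u1" "weak_deriv a b (\<lambda>t. blinfun_apply J (u t)) u1"
    "AE t in lborel. t \<in> {a<..<b} \<longrightarrow> u1 t + blinfun_apply (A t) (u t) = f t"
    using assms(1) unfolding strong_solution_def by blast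
  obtain u2 where u2: "Lpw a b 0 1 u2" "weak_deriv a b (\<lambda>t. blinfun_apply J (v t)) u2"
    "AE t in lborel. t \<in> {a<..<b} \<longrightarrow> u2 t + blinfun_apply (A t) (v t) = f t"
    using assms(2) unfolding strong_solution_def by blast
  have eqJ: "(\<lambda>t. blinfun_apply J (u t - v t)) = (\<lambda>t. blinfun_apply J (u t) - blinfun_apply J (v t))"
    by (simp add: blinfun.diff_right)
  have eqA: "(\<lambda>t. blinfun_apply (A t) (u t - v t)) = (\<lambda>t. blinfun_apply (A t) (u t) - blinfun_apply (A t) (v t))"
    by (simp add: blinfun.diff_right)
  have "Lpw a b 0 1 (\<lambda>t. u t - v t)" "Lpw a b 0 1 (\<lambda>t. blinfun_apply J (u t - v t))"
    "Lpw a b 0 1 (\<lambda>t. blinfun_apply (A t) (u t - v t))"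
    unfolding eqJ eqA using assms unfolding strong_solution_def by (auto intro!: Lpw_diff)
  moreover have "Lpw a b 0 1 (\<lambda>t. u1 t - u2 t)" by (rule Lpw_diff[OF u1(1) u2(1)]) simp
  moreover have "weak_deriv a b (\<lambda>t. blinfun_apply J (u t - v t)) (\<lambda>t. u1 t - u2 t)"
    unfolding eqJ by (rule weak_deriv_diff[OF u1(2) u2(2)])
  moreover have "AE t in lborel. t \<in> {a<..<b} \<longrightarrow> u1 t - u2 t + blinfun_apply (A t) (u t - v t) = 0"
    using u1(3) u2(3) by eventually_elim (auto simp: blinfun.diff_right algebra_simps)
  moreover have "trace_left a b (\<lambda>t. blinfun_apply J (u t - v t)) 0"
    unfolding eqJ using trace_left_diff assms unfolding strong_solution_def by fastforce
  ultimately show ?thesis unfolding strong_solution_def by blast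
qed

lemma MR_zero_extension:
  assumes v: "MR J p \<kappa> a \<tau> v" and a0: "0 \<le> a" and a\<tau>: "a < \<tau>" and p1: "1 \<le> p" and k0: "0 \<le> \<kappa>"
    and hc: "continuous_on {a..\<tau>} h" and ha: "h a = 0"
    and gh: "AE t in lborel. t \<in> {a<..<\<tau>} \<longrightarrow> blinfun_apply J (v t) = h t"
  shows "MR J p \<kappa> 0 \<tau> (\<lambda>t. if t \<le> a then 0 else v t)"
    "MR_norm J p \<kappa> 0 \<tau> (\<lambda>t. if t \<le> a then 0 else v t) = MR_norm J p \<kappa> a \<tau> v"
proof -
  obtain g' where g': "weak_deriv a \<tau> (\<lambda>t. blinfun_apply J (v t)) g'" "Lpw a \<tau> \<kappa> p g'"
    using v unfolding MR_def W1pw_def by blast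
  have p0: "0 < p" using p1 by simp
  have eqJ: "(\<lambda>t. blinfun_apply J (if t \<le> a then 0 else v t)) = (\<lambda>t. if t \<le> a then 0 else blinfun_apply J (v t))"
    by (auto simp: blinfun.zero_right)
  have Lv: "Lpw a \<tau> \<kappa> p v" and LJ: "Lpw a \<tau> \<kappa> p (\<lambda>t. blinfun_apply J (v t))"
    using v unfolding MR_def W1pw_def by blast+
  note ev = Lpw_extend_by_0_left[OF Lv p0 a0]
  note eJ = Lpw_extend_by_0_left[OF LJ p0 a0]
  note eg = Lpw_extend_by_0_left[OF g'(2) p0 a0]
  have wd: "weak_deriv 0 \<tau> (\<lambda>t. if t \<le> a then 0 else blinfun_apply J (v t)) (\<lambda>t. if t \<le> a then 0 else g' t)"
    by (rule weak_deriv_zero_extension[OF g'(1) g'(2) p1 k0 a0 a\<tau> hc ha gh])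
  show "MR J p \<kappa> 0 \<tau> (\<lambda>t. if t \<le> a then 0 else v t)"
    unfolding MR_def W1pw_def eqJ using ev(1) eJ(1) eg(1) wd by blast
  have "W1pw_norm 0 \<tau> \<kappa> p (\<lambda>t. if t \<le> a then 0 else blinfun_apply J (v t))
      = (Lpw_norm 0 \<tau> \<kappa> p (\<lambda>t. if t \<le> a then 0 else blinfun_apply J (v t)) powr p
         + Lpw_norm 0 \<tau> \<kappa> p (\<lambda>t. if t \<le> a then 0 else g' t) powr p) powr (1 / p)"
    by (rule W1pw_norm_eq[OF wd eg(1) order.refl p1 k0])
  also have "\<dots> = W1pw_norm a \<tau> \<kappa> p (\<lambda>t. blinfun_apply J (v t))"
    using W1pw_norm_eq[OF g'(1) g'(2) a0 p1 k0] eJ(2) eg(2) by simp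
  finally show "MR_norm J p \<kappa> 0 \<tau> (\<lambda>t. if t \<le> a then 0 else v t) = MR_norm J p \<kappa> a \<tau> v"
    unfolding MR_norm_def eqJ ev(2) by simp
qed

lemma trace_left_zero_extension:
  fixes g :: "real \<Rightarrow> 'a::real_normed_vector"
  assumes g: "trace_left a \<tau> g 0" and a0: "0 \<le> a" and a\<tau>: "a < \<tau>"
  shows "trace_left 0 \<tau> (\<lambda>t. if t \<le> a then 0 else g t) 0"
proof -
  obtain h where h: "continuous_on {a..\<tau>} h" "h a = 0" "AE t in lborel. t \<in> {a<..<\<tau>} \<longrightarrow> g t = h t"
    using g unfolding trace_left_def by blast
  let ?h = "\<lambda>t. if t \<le> a then 0 else h t"
  have c1: "continuous_on {0..a} ?h"
    by (rule continuous_on_cong[THEN iffD2, OF refl _ continuous_on_const[of _ 0]]) auto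
  have c2: "continuous_on {a..\<tau>} ?h"
    by (rule continuous_on_cong[THEN iffD2, OF refl _ h(1)]) (use h(2) in auto)
  have "continuous_on ({0..a} \<union> {a..\<tau>}) ?h" by (rule continuous_on_closed_Un[OF _ _ c1 c2]) auto
  moreover have "{0..a} \<union> {a..\<tau>} = {0..\<tau>}" using a0 a\<tau> by auto
  moreover have "AE t in lborel. t \<in> {0<..<\<tau>} \<longrightarrow> (if t \<le> a then 0 else g t) = ?h t"
    using h(3) by eventually_elim auto
  ultimately show ?thesis unfolding trace_left_def using a0 by (intro exI[of _ ?h]) auto
qed

lemma strong_solution_zero_extension:
  assumes ss: "strong_solution J A a \<tau> f 0 v" and a0: "0 \<le> a" and a\<tau>: "a < \<tau>"
    and f1: "\<And>t. 0 < t \<Longrightarrow> t \<le> a \<Longrightarrow> f' t = 0" and f2: "\<And>t. a < t \<Longrightarrow> t < \<tau> \<Longrightarrow> f' t = f t"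
  shows "strong_solution J A 0 \<tau> f' 0 (\<lambda>t. if t \<le> a then 0 else v t)"
proof -
  obtain u' where u': "Lpw a \<tau> 0 1 u'" "weak_deriv a \<tau> (\<lambda>t. blinfun_apply J (v t)) u'"
    "AE t in lborel. t \<in> {a<..<\<tau>} \<longrightarrow> u' t + blinfun_apply (A t) (v t) = f t"
    using ss unfolding strong_solution_def by blast
  obtain h where h: "continuous_on {a..\<tau>} h" "h a = 0" "AE t in lborel. t \<in> {a<..<\<tau>} \<longrightarrow> blinfun_apply J (v t) = h t"
    using ss unfolding strong_solution_def trace_left_def by blast
  have eqJ: "(\<lambda>t. blinfun_apply J (if t \<le> a then 0 else v t)) = (\<lambda>t. if t \<le> a then 0 else blinfun_apply J (v t))"
    by (auto simp: blinfun.zero_right)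
  have eqA: "(\<lambda>t. blinfun_apply (A t) (if t \<le> a then 0 else v t)) = (\<lambda>t. if t \<le> a then 0 else blinfun_apply (A t) (v t))"
    by (auto simp: blinfun.zero_right)
  have Ls: "Lpw a \<tau> 0 1 v" "Lpw a \<tau> 0 1 (\<lambda>t. blinfun_apply J (v t))" "Lpw a \<tau> 0 1 (\<lambda>t. blinfun_apply (A t) (v t))"
    using ss unfolding strong_solution_def by blast+
  have L1: "Lpw 0 \<tau> 0 1 (\<lambda>t. if t \<le> a then 0 else v t)" by (rule Lpw_extend_by_0_left(1)[OF Ls(1) _ a0]) simp
  have L2: "Lpw 0 \<tau> 0 1 (\<lambda>t. blinfun_apply J (if t \<le> a then 0 else v t))"
    unfolding eqJ by (rule Lpw_extend_by_0_left(1)[OF Ls(2) _ a0]) simp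
  have L3: "Lpw 0 \<tau> 0 1 (\<lambda>t. blinfun_apply (A t) (if t \<le> a then 0 else v t))"
    unfolding eqA by (rule Lpw_extend_by_0_left(1)[OF Ls(3) _ a0]) simp
  have D: "\<exists>w. Lpw 0 \<tau> 0 1 w \<and> weak_deriv 0 \<tau> (\<lambda>t. blinfun_apply J (if t \<le> a then 0 else v t)) w \<and>
      (AE t in lborel. t \<in> {0<..<\<tau>} \<longrightarrow> w t + blinfun_apply (A t) (if t \<le> a then 0 else v t) = f' t)"
  proof (intro exI conjI)
    show "Lpw 0 \<tau> 0 1 (\<lambda>t. if t \<le> a then 0 else u' t)" by (rule Lpw_extend_by_0_left(1)[OF u'(1) _ a0]) simp
    show "weak_deriv 0 \<tau> (\<lambda>t. blinfun_apply J (if t \<le> a then 0 else v t)) (\<lambda>t. if t \<le> a then 0 else u' t)"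
      unfolding eqJ by (rule weak_deriv_zero_extension[OF u'(2) u'(1) _ _ a0 a\<tau> h(1,2,3)]) auto
    show "AE t in lborel. t \<in> {0<..<\<tau>} \<longrightarrow> (if t \<le> a then 0 else u' t) + blinfun_apply (A t) (if t \<le> a then 0 else v t) = f' t"
      using u'(3) by eventually_elim (use f1 f2 in \<open>auto simp: blinfun.zero_right\<close>)
  qed
  have T: "trace_left 0 \<tau> (\<lambda>t. blinfun_apply J (if t \<le> a then 0 else v t)) 0"
    unfolding eqJ using trace_left_zero_extension[OF _ a0 a\<tau>] ss
    unfolding strong_solution_def by blast
  show ?thesis unfolding strong_solution_def using L1 L2 L3 D T by blast
qed

lemma MR_constsD:
  assumes "C \<in> MR_consts J A p \<kappa> a b" "Lpw a b \<kappa> p f" "\<tau> \<in> {a<..b}"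
    "MR J p \<kappa> a \<tau> v" "strong_solution J A a \<tau> f 0 v"
  shows "MR_norm J p \<kappa> a \<tau> v \<le> C * Lpw_norm a \<tau> \<kappa> p f"
  using assms unfolding MR_consts_def by blast

lemma MR_consts_subinterval:
  assumes M: "M \<in> MR_consts J A p \<kappa> 0 T" and a0: "0 \<le> a" and bT: "b \<le> T"
    and p1: "1 < p" and k0: "0 \<le> \<kappa>"
  shows "M \<in> MR_consts J A p \<kappa> a b"
  unfolding MR_consts_def
proof (intro CollectI conjI allI impI)
  show "0 \<le> M" using M unfolding MR_consts_def by blast
  fix f \<tau> v assume f: "Lpw a b \<kappa> p f" and \<tau>: "\<tau> \<in> {a<..b}"
    and v: "MR J p \<kappa> a \<tau> v" "strong_solution J A a \<tau> f 0 v"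
  define f' where "f' t = (if t \<in> {a<..<b} then f t else 0)" for t
  have p0: "0 < p" using p1 by simp
  have Lf: "Lpw 0 T \<kappa> p f'" unfolding f'_def by (rule Lpw_zero_extension[OF f p0])
  obtain h where h: "continuous_on {a..\<tau>} h" "h a = 0" "AE t in lborel. t \<in> {a<..<\<tau>} \<longrightarrow> blinfun_apply J (v t) = h t"
    using v(2) unfolding strong_solution_def trace_left_def by blast
  have a\<tau>: "a < \<tau>" "\<tau> \<le> b" using \<tau> by auto
  note E = MR_zero_extension[OF v(1) a0 a\<tau>(1) _ k0 h]
  have MRe: "MR J p \<kappa> 0 \<tau> (\<lambda>t. if t \<le> a then 0 else v t)" using E p1 by simp
  have MRn: "MR_norm J p \<kappa> 0 \<tau> (\<lambda>t. if t \<le> a then 0 else v t) = MR_norm J p \<kappa> a \<tau> v" using E p1 by simp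
  have SSe: "strong_solution J A 0 \<tau> f' 0 (\<lambda>t. if t \<le> a then 0 else v t)"
    by (rule strong_solution_zero_extension[OF v(2) a0 a\<tau>(1)]) (use a\<tau> in \<open>auto simp: f'_def\<close>)
  have \<tau>0: "\<tau> \<in> {0<..T}" using a0 a\<tau> bT by auto
  have "MR_norm J p \<kappa> 0 \<tau> (\<lambda>t. if t \<le> a then 0 else v t) \<le> M * Lpw_norm 0 \<tau> \<kappa> p f'"
    by (rule MR_constsD[OF M Lf \<tau>0 MRe SSe])
  moreover have "Lpw_norm 0 \<tau> \<kappa> p f' = Lpw_norm a \<tau> \<kappa> p f"
  proof -
    have "Lpw_norm 0 \<tau> \<kappa> p f' = Lpw_norm 0 \<tau> \<kappa> p (\<lambda>t. if t \<in> {a<..<\<tau>} then f t else 0)"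
      by (rule Lpw_cong(2)) (use a\<tau> in \<open>auto simp: f'_def\<close>)
    also have "\<dots> = Lpw_norm a \<tau> \<kappa> p f" by (rule Lpw_norm_zero_extension[OF p0 a0 order.refl])
    finally show ?thesis .
  qed
  ultimately show "MR_norm J p \<kappa> a \<tau> v \<le> M * Lpw_norm a \<tau> \<kappa> p f" using MRn by simp
qed

lemma M_const_mem_MR_consts:
  assumes ne: "MR_consts J A p \<kappa> a b \<noteq> {}"
  shows "M_const J A p \<kappa> a b \<in> MR_consts J A p \<kappa> a b"
proof -
  let ?S = "MR_consts J A p \<kappa> a b"
  have S0: "\<And>C. C \<in> ?S \<Longrightarrow> 0 \<le> C" unfolding MR_consts_def by blast
  have I0: "0 \<le> Inf ?S" using ne S0 by (intro cInf_greatest) auto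
  have "MR_norm J p \<kappa> a \<tau> v \<le> Inf ?S * Lpw_norm a \<tau> \<kappa> p f"
    if H: "Lpw a b \<kappa> p f" "\<tau> \<in> {a<..b}" "MR J p \<kappa> a \<tau> v" "strong_solution J A a \<tau> f 0 v" for f \<tau> v
  proof -
    let ?m = "MR_norm J p \<kappa> a \<tau> v" and ?L = "Lpw_norm a \<tau> \<kappa> p f"
    have all: "?m \<le> C * ?L" if "C \<in> ?S" for C using that H unfolding MR_consts_def by blast
    show ?thesis
    proof (cases "?L = 0")
      case True
      obtain C where "C \<in> ?S" using ne by blast
      then show ?thesis using all True by force
    next
      case False
      then have Lpos: "?L > 0" using Lpw_norm_nonneg[of a \<tau> \<kappa> p f] by linarith
      have "?m / ?L \<le> Inf ?S"
        using ne by (intro cInf_greatest) (use all Lpos in \<open>auto simp: divide_le_eq\<close>)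
      then show ?thesis using Lpos by (simp add: divide_le_eq)
    qed
  qed
  then show ?thesis using I0 unfolding M_const_def by (subst (2) MR_consts_def) blast
qed

lemma MR_consts_solution_unique:
  fixes J :: "'x1::banach \<Rightarrow>\<^sub>L 'x0::banach"
  assumes C: "C \<in> MR_consts J A p \<kappa> a b" and a0: "0 \<le> a" and ab: "a < b" and p0: "0 < p"
    and u: "MR J p \<kappa> a b u" "strong_solution J A a b f 0 u"
    and v: "MR J p \<kappa> a b v" "strong_solution J A a b f 0 v"
  shows "AE t in lborel. t \<in> {a<..<b} \<longrightarrow> u t = v t"
proof -
  have MRw: "MR J p \<kappa> a b (\<lambda>t. u t - v t)" by (rule MR_diff[OF u(1) v(1) p0])
  have "MR_norm J p \<kappa> a b (\<lambda>t. u t - v t) \<le> C * Lpw_norm a b \<kappa> p (\<lambda>t. 0::'x0)"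
    using ab by (intro MR_constsD[OF C Lpw_zero(1)[OF p0] _ MRw strong_solution_diff[OF u(2) v(2)]]) simp
  then have "Lpw_norm a b \<kappa> p (\<lambda>t. u t - v t) \<le> 0"
    unfolding MR_norm_def Lpw_zero(2)[OF p0] by simp
  then have "AE t in lborel. t \<in> {a<..<b} \<longrightarrow> u t - v t = 0"
    using MRw unfolding MR_def by (intro Lpw_norm_le_0_AE_zero[OF _ a0 p0]) auto
  then show ?thesis by eventually_elim auto
qed

lemma continuous_on_AE_zero_endpoint:
  fixes h :: "real \<Rightarrow> 'a::real_normed_vector"
  assumes hc: "continuous_on {c..a} h" and ca: "c < a" and ae: "AE t in lborel. t \<in> {c<..<a} \<longrightarrow> h t = 0"
  shows "h a = 0"
proof (rule ccontr)
  assume ha: "h a \<noteq> 0"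
  then have "norm (h a) > 0" by simp
  then obtain \<delta> where \<delta>: "\<delta> > 0" "\<And>t. t \<in> {c..a} \<Longrightarrow> dist t a < \<delta> \<Longrightarrow> dist (h t) (h a) < norm (h a)"
    using hc[unfolded continuous_on_iff] ca by (meson atLeastAtMost_iff order.refl less_imp_le)
  define x where "x = max c (a - \<delta>)"
  have xa: "x < a" using ca \<delta>(1) by (auto simp: x_def)
  obtain N where N: "N \<in> null_sets lborel" "\<And>t. t \<in> space lborel - N \<Longrightarrow> t \<in> {c<..<a} \<longrightarrow> h t = 0"
    using AE_E3[OF ae] by blast
  have "{x<..<a} \<subseteq> N"
  proof
    fix t assume t: "t \<in> {x<..<a}"
    then have "t \<in> {c..a}" "dist t a < \<delta>" by (auto simp: x_def dist_real_def)
    then have "dist (h t) (h a) < norm (h a)" by (rule \<delta>(2))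
    then have "h t \<noteq> 0" by auto
    moreover have "t \<in> {c<..<a}" using t by (auto simp: x_def)
    ultimately show "t \<in> N" using N(2)[of t] by auto
  qed
  then have "emeasure lborel {x<..<a} \<le> emeasure lborel N" by (intro emeasure_mono) (use N in auto)
  then show False using null_setsD1[OF N(1)] xa by simp
qed

lemma MR_consts_solution_vanishes_before_data:
  fixes J :: "'x1::banach \<Rightarrow>\<^sub>L 'x0::banach"
  assumes M: "M \<in> MR_consts J A p \<kappa> 0 T" and p0: "0 < p" and a0: "0 \<le> a" and aT: "a \<le> T"
    and Lf: "Lpw 0 T \<kappa> p f" and f0: "\<And>t. t \<in> {0<..<a} \<Longrightarrow> f t = 0"
    and U: "MR J p \<kappa> 0 T U" "strong_solution J A 0 T f 0 U"
    and h: "continuous_on {0..T} h" "h 0 = 0"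
      "AE t in lborel. t \<in> {0<..<T} \<longrightarrow> blinfun_apply J (U t) = h t"
  shows "h a = 0"
proof (cases "a = 0")
  case False
  then have apos: "0 < a" using a0 by simp
  have MRa: "MR J p \<kappa> 0 a U" by (rule MR_subinterval[OF U(1) order.refl aT])
  have "trace_left 0 a (\<lambda>t. blinfun_apply J (U t)) 0"
    using trace_left_subinterval[OF h(1) h(3) order.refl aT] h(2) by simp
  then have SSa: "strong_solution J A 0 a f 0 U"
    by (rule strong_solution_subinterval[OF U(2) order.refl aT]) simp
  have "Lpw_norm 0 a \<kappa> p f = Lpw_norm 0 a \<kappa> p (\<lambda>t. 0::'x0)"
    by (intro Lpw_cong(2)) (simp add: f0)
  also have "\<dots> = 0" by (rule Lpw_zero(2)[OF p0])
  finally have "MR_norm J p \<kappa> 0 a U \<le> 0"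
    using MR_constsD[OF M Lf _ MRa SSa] apos aT by simp
  then have "Lpw_norm 0 a \<kappa> p U \<le> 0" unfolding MR_norm_def by simp
  then have "AE t in lborel. t \<in> {0<..<a} \<longrightarrow> U t = 0"
    using MRa unfolding MR_def by (intro Lpw_norm_le_0_AE_zero[OF _ order.refl p0]) auto
  then have "AE t in lborel. t \<in> {0<..<a} \<longrightarrow> h t = 0"
    using h(3) by eventually_elim (use aT in \<open>auto simp: blinfun.zero_right\<close>)
  moreover have "continuous_on {0..a} h" by (rule continuous_on_subset[OF h(1)]) (use aT in auto)
  ultimately show ?thesis using continuous_on_AE_zero_endpoint apos by blast
qed (use h(2) in simp)

lemma max_reg_subinterval_solution:
  assumes mr: "max_reg J A p \<kappa> 0 T" and p1: "1 < p" and k0: "0 \<le> \<kappa>"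
    and a0: "0 \<le> a" and ab: "a < b" and bT: "b \<le> T" and f: "Lpw a b \<kappa> p f"
  shows "\<exists>u. MR J p \<kappa> a b u \<and> strong_solution J A a b f 0 u \<and>
    MR_norm J p \<kappa> a b u \<le> M_const J A p \<kappa> 0 T * Lpw_norm a b \<kappa> p f"
proof -
  have p0: "0 < p" using p1 by simp
  have M: "M_const J A p \<kappa> 0 T \<in> MR_consts J A p \<kappa> 0 T"
    using mr unfolding max_reg_def by (intro M_const_mem_MR_consts) blast
  define f' where "f' t = (if t \<in> {a<..<b} then f t else 0)" for t
  have Lf: "Lpw 0 T \<kappa> p f'" unfolding f'_def by (rule Lpw_zero_extension[OF f p0])
  obtain U where U: "MR J p \<kappa> 0 T U" "strong_solution J A 0 T f' 0 U"
    using mr Lf unfolding max_reg_def by blast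
  obtain h where h: "continuous_on {0..T} h" "h 0 = 0"
    "AE t in lborel. t \<in> {0<..<T} \<longrightarrow> blinfun_apply J (U t) = h t"
    using U(2) unfolding strong_solution_def trace_left_def by blast
  have "h a = 0"
    by (rule MR_consts_solution_vanishes_before_data[OF M p0 a0 _ Lf _ U h])
       (use ab bT in \<open>auto simp: f'_def\<close>)
  then have "trace_left a b (\<lambda>t. blinfun_apply J (U t)) 0"
    using trace_left_subinterval[OF h(1) h(3) a0 bT] by simp
  then have SS: "strong_solution J A a b f 0 U"
    by (rule strong_solution_subinterval[OF U(2) a0 bT]) (simp add: f'_def)
  have MRab: "MR J p \<kappa> a b U" by (rule MR_subinterval[OF U(1) a0 bT])
  have "MR_norm J p \<kappa> a b U \<le> M_const J A p \<kappa> 0 T * Lpw_norm a b \<kappa> p f"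
    using ab by (intro MR_constsD[OF MR_consts_subinterval[OF M a0 bT p1 k0] f _ MRab SS]) simp
  then show ?thesis using MRab SS by blast
qed

theorem lemma2p2:
  fixes J :: "'x1::banach \<Rightarrow>\<^sub>L 'x0::banach"
    and A :: "real \<Rightarrow> ('x1 \<Rightarrow>\<^sub>L 'x0)"
    and T p \<kappa> a b :: real
    and f :: "real \<Rightarrow> 'x0"
  assumes "0 < T"
    and "inj (blinfun_apply J)"
    and "closure (range (blinfun_apply J)) = UNIV"
    and "\<forall>x. strongly_measurable_on {0..T} (\<lambda>t. blinfun_apply (A t) x)"
    and "1 < p" and "0 \<le> \<kappa>" and "\<kappa> < p - 1"
    and "max_reg J A p \<kappa> 0 T"
    and "0 \<le> a" and "a < b" and "b \<le> T"
    and "Lpw a b \<kappa> p f"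
  shows "(\<exists>u. MR J p \<kappa> a b u \<and> strong_solution J A a b f 0 u \<and>
              MR_norm J p \<kappa> a b u \<le> M_const J A p \<kappa> 0 T * Lpw_norm a b \<kappa> p f) \<and>
         (\<forall>u v. MR J p \<kappa> a b u \<and> strong_solution J A a b f 0 u \<and>
                MR J p \<kappa> a b v \<and> strong_solution J A a b f 0 v \<longrightarrow>
                (AE t in lborel. t \<in> {a<..<b} \<longrightarrow> u t = v t)) \<and>
         max_reg J A p \<kappa> a b \<and>
         M_const J A p \<kappa> a b \<le> M_const J A p \<kappa> 0 T"
proof -
  note mr = assms(8) and p1 = assms(5) and k0 = assms(6)
    and a0 = assms(9) and ab = assms(10) and bT = assms(11)
  have M: "M_const J A p \<kappa> 0 T \<in> MR_consts J A p \<kappa> 0 T"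
    using mr unfolding max_reg_def by (intro M_const_mem_MR_consts) blast
  have Mab: "M_const J A p \<kappa> 0 T \<in> MR_consts J A p \<kappa> a b"
    by (rule MR_consts_subinterval[OF M a0 bT p1 k0])
  note exist = max_reg_subinterval_solution[OF mr p1 k0 a0 ab bT]
  have uniq: "AE t in lborel. t \<in> {a<..<b} \<longrightarrow> u t = v t"
    if "MR J p \<kappa> a b u \<and> strong_solution J A a b g 0 u \<and>
        MR J p \<kappa> a b v \<and> strong_solution J A a b g 0 v" for g u v
    using that p1 by (intro MR_consts_solution_unique[OF Mab a0 ab]) auto
  have "max_reg J A p \<kappa> a b"
    unfolding max_reg_def using exist uniq Mab by blast
  moreover have "M_const J A p \<kappa> a b \<le> M_const J A p \<kappa> 0 T"
    unfolding M_const_def[of J A p \<kappa> a b]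
    by (rule cInf_lower[OF Mab]) (auto simp: bdd_below_def MR_consts_def)
  ultimately show ?thesis using exist[OF assms(12)] uniq by blast
qed

end
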